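(* Let $X$ be a diffeological space, $\pi_1:V_1\to X$ and $\pi_2:V_2\to X$ finite-dimensional diffeological vector pseudo-bundles over it, and $\nabla^1,\nabla^2$ connections on $V_1,V_2$. Then the operator $\nabla^1\oplus\nabla^2$ is well-defined as a map $C^\infty(X,V_1\oplus V_2)\to C^\infty(X,\Lambda^1(X)\otimes(V_1\oplus V_2))$ and is a connection on $V_1\oplus V_2$.
   Context: Diffeological spaces, smooth maps, functional diffeologies and diffeological vector pseudo-bundles (smooth surjections with vector space fibres whose fibrewise operations and zero section are smooth) are as usual; the direct sum $V_1\oplus V_2=V_1\times_XV_2$ carries the subset diffeology of the product, and tensor products the tensor product pseudo-bundle diffeology. $\mathrm{pr}_{V_i}:V_1\oplus V_2\to V_i$ are the projections and $\mathrm{Incl}_{V_i}:V_i\to V_1\oplus V_2$ the inclusions. $\Omega^1(X)$ is the space of diffeological 1-forms (assigning to each plot $p:U\to X$ an ordinary 1-form $\omega(p)$ with $\omega(p\circ F)=F^*\omega(p)$); $\Lambda^1(X)$ is the quotient of $X\times\Omega^1(X)$ by forms vanishing at each point ($\omega(p)(0)=0$ for all plots with $p(0)=x$), with quotient diffeology; $dh$ is the section $x\mapsto[x,dh]$, $dh(p)=d(h\circ p)$. A connection on a finite-dimensional pseudo-bundle $V\to X$ is a smooth linear operator $\nabla:C^\infty(X,V)\to C^\infty(X,\Lambda^1(X)\otimes V)$ with $\nabla(hs)=dh\otimes s+h\nabla s$ for smooth $h:X\to\mathbb{R}$. For $s\in C^\infty(X,V_1\oplus V_2)$ with $s_i=\mathrm{pr}_{V_i}\circ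 s$, $(\nabla^1\oplus\nabla^2)s=(\mathrm{Id}_{\Lambda^1(X)}\otimes\mathrm{Incl}_{V_1})\circ\nabla^1s_1+(\mathrm{Id}_{\Lambda^1(X)}\otimes\mathrm{Incl}_{V_2})\circ\nabla^2s_2$. *)

theory Defs
  imports "HOL-Analysis.Analysis"
begin

type_synonym rv = "nat \<Rightarrow> real"

definition Rn :: "nat \<Rightarrow> rv set" where
  "Rn n = {x. \<forall>i\<ge>n. x i = 0}"

definition open_in_Rn :: "nat \<Rightarrow> rv set \<Rightarrow> bool" where
  "open_in_Rn n U \<longleftrightarrow> U \<subseteq> Rn n \<and>
     (\<forall>x\<in>U. \<exists>e>0. \<forall>y\<in>Rn n. (\<forall>i<n. \<bar>y i - x i\<bar> < e) \<longrightarrow> y \<in> U)"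

definition shift :: "rv \<Rightarrow> nat \<Rightarrow> real \<Rightarrow> rv" where
  "shift x i t = (\<lambda>j. x j + (if j = i then t else 0))"

definition pd :: "nat \<Rightarrow> (rv \<Rightarrow> real) \<Rightarrow> rv \<Rightarrow> real" where
  "pd i f x = deriv (\<lambda>t. f (shift x i t)) 0"

definition iter_pd :: "nat list \<Rightarrow> (rv \<Rightarrow> real) \<Rightarrow> rv \<Rightarrow> real" where
  "iter_pd ks f = foldr pd ks f"

definition smooth_fn :: "nat \<Rightarrow> rv set \<Rightarrow> (rv \<Rightarrow> real) \<Rightarrow> bool" where
  "smooth_fn n U f \<longleftrightarrow> (\<forall>ks. set ks \<subseteq> {..<n} \<longrightarrow>
      continuous_on U (iter_pd ks f) \<and>
      (\<forall>i<n. \<forall>x\<in>U. (\<lambda>t. iter_pd ks f (shift x i t)) differentiable (at 0)))"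

definition smooth_map :: "nat \<Rightarrow> rv set \<Rightarrow> nat \<Rightarrow> (rv \<Rightarrow> rv) \<Rightarrow> bool" where
  "smooth_map m W n F \<longleftrightarrow> (\<forall>w\<in>W. F w \<in> Rn n) \<and> (\<forall>i<n. smooth_fn m W (\<lambda>w. F w i))"

definition joinset :: "nat \<Rightarrow> rv set \<Rightarrow> rv set \<Rightarrow> rv set" where
  "joinset n U W = {(\<lambda>i. if i < n then u i else w (i - n)) | u w. u \<in> U \<and> w \<in> W}"

definition fpart :: "nat \<Rightarrow> rv \<Rightarrow> rv" where
  "fpart n z = (\<lambda>i. if i < n then z i else 0)"

definition spart :: "nat \<Rightarrow> rv \<Rightarrow> rv" where
  "spart n z = (\<lambda>i. z (i + n))"

text \<open>A plot is a triple (n, U, p) with U open in R^n and p : U -> X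
  (represented extensionally, i.e. p = undefined off U).\<close>
type_synonym 'a plot = "nat \<times> rv set \<times> (rv \<Rightarrow> 'a)"

definition plot_of :: "nat \<Rightarrow> rv set \<Rightarrow> (rv \<Rightarrow> 'a) \<Rightarrow> 'a plot" where
  "plot_of n U p = (n, U, restrict p U)"

definition diffeology :: "'a set \<Rightarrow> 'a plot set \<Rightarrow> bool" where
  "diffeology X D \<longleftrightarrow>
     (\<forall>(n,U,p)\<in>D. open_in_Rn n U \<and> p = restrict p U \<and> p ` U \<subseteq> X) \<and>
     (\<forall>n U x. open_in_Rn n U \<and> x \<in> X \<longrightarrow> plot_of n U (\<lambda>_. x) \<in> D) \<and>
     (\<forall>n U p. open_in_Rn n U \<and> p ` U \<subseteq> X \<and>
        (\<forall>u\<in>U. \<exists>V. open_in_Rn n V \<and> u \<in> V \<and> V \<subseteq> U \<and> plot_of n V p \<in> D)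
        \<longrightarrow> plot_of n U p \<in> D) \<and>
     (\<forall>(n,U,p)\<in>D. \<forall>m W F. open_in_Rn m W \<and> smooth_map m W n F \<and> F ` W \<subseteq> U
        \<longrightarrow> plot_of m W (p \<circ> F) \<in> D)"

definition smooth_betw :: "'a set \<Rightarrow> 'a plot set \<Rightarrow> 'b set \<Rightarrow> 'b plot set \<Rightarrow> ('a \<Rightarrow> 'b) \<Rightarrow> bool" where
  "smooth_betw X DX Y DY f \<longleftrightarrow> (\<forall>x\<in>X. f x \<in> Y) \<and> (\<forall>(n,U,p)\<in>DX. plot_of n U (f \<circ> p) \<in> DY)"

definition real_diff :: "real plot set" where
  "real_diff = {(n,U,p). open_in_Rn n U \<and> p = restrict p U \<and> smooth_fn n U p}"

definition prod_diff :: "'a plot set \<Rightarrow> 'b plot set \<Rightarrow> ('a \<times> 'b) plot set" where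
  "prod_diff D1 D2 = {(n,U,p). open_in_Rn n U \<and> p = restrict p U \<and>
      plot_of n U (fst \<circ> p) \<in> D1 \<and> plot_of n U (snd \<circ> p) \<in> D2}"

definition subset_diff :: "'a plot set \<Rightarrow> 'a set \<Rightarrow> 'a plot set" where
  "subset_diff D A = {(n,U,p). (n,U,p) \<in> D \<and> p ` U \<subseteq> A}"

definition quot_diff :: "'a plot set \<Rightarrow> ('a \<Rightarrow> 'b) \<Rightarrow> 'b plot set" where
  "quot_diff D q = {(n,U,p). open_in_Rn n U \<and> p = restrict p U \<and>
      (\<forall>u\<in>U. \<exists>V r. open_in_Rn n V \<and> u \<in> V \<and> V \<subseteq> U \<and> (n, V, r) \<in> D \<and>
          (\<forall>v\<in>V. p v = q (r v)))}"

text \<open>functional diffeology on a set S of maps X -> Y (maps taken extensional on X)\<close>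
definition func_diff :: "'a plot set \<Rightarrow> 'b plot set \<Rightarrow> ('a \<Rightarrow> 'b) set \<Rightarrow> ('a \<Rightarrow> 'b) plot set" where
  "func_diff DX DY S = {(n,U,q). open_in_Rn n U \<and> q = restrict q U \<and> q ` U \<subseteq> S \<and>
      (\<forall>(m,W,p)\<in>DX. plot_of (n + m) (joinset n U W) (\<lambda>z. q (fpart n z) (p (spart n z))) \<in> DY)}"

record ('a, 'v) vpb =
  pb_tot :: "'v set"
  pb_diff :: "'v plot set"
  pb_proj :: "'v \<Rightarrow> 'a"
  pb_add :: "'v \<Rightarrow> 'v \<Rightarrow> 'v"
  pb_smul :: "real \<Rightarrow> 'v \<Rightarrow> 'v"
  pb_zero :: "'a \<Rightarrow> 'v"

definition fib :: "('a, 'v) vpb \<Rightarrow> 'a \<Rightarrow> 'v set" where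
  "fib B x = {v \<in> pb_tot B. pb_proj B v = x}"

definition vector_space_on :: "'v set \<Rightarrow> ('v \<Rightarrow> 'v \<Rightarrow> 'v) \<Rightarrow> (real \<Rightarrow> 'v \<Rightarrow> 'v) \<Rightarrow> 'v \<Rightarrow> bool" where
  "vector_space_on F add smul z \<longleftrightarrow> z \<in> F \<and>
     (\<forall>v\<in>F. \<forall>w\<in>F. add v w \<in> F) \<and> (\<forall>c. \<forall>v\<in>F. smul c v \<in> F) \<and>
     (\<forall>u\<in>F. \<forall>v\<in>F. \<forall>w\<in>F. add (add u v) w = add u (add v w)) \<and>
     (\<forall>v\<in>F. \<forall>w\<in>F. add v w = add w v) \<and>
     (\<forall>v\<in>F. add z v = v) \<and>
     (\<forall>v\<in>F. \<exists>w\<in>F. add v w = z) \<and>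
     (\<forall>c. \<forall>v\<in>F. \<forall>w\<in>F. smul c (add v w) = add (smul c v) (smul c w)) \<and>
     (\<forall>a b. \<forall>v\<in>F. smul (a + b) v = add (smul a v) (smul b v)) \<and>
     (\<forall>a b. \<forall>v\<in>F. smul a (smul b v) = smul (a * b) v) \<and>
     (\<forall>v\<in>F. smul 1 v = v)"

definition fibprod :: "('a, 'v) vpb \<Rightarrow> ('a, 'w) vpb \<Rightarrow> ('v \<times> 'w) set" where
  "fibprod B C = {(v, w). v \<in> pb_tot B \<and> w \<in> pb_tot C \<and> pb_proj B v = pb_proj C w}"

definition fibprod_diff :: "('a, 'v) vpb \<Rightarrow> ('a, 'w) vpb \<Rightarrow> ('v \<times> 'w) plot set" where
  "fibprod_diff B C = subset_diff (prod_diff (pb_diff B) (pb_diff C)) (fibprod B C)"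

definition is_vpb :: "'a set \<Rightarrow> 'a plot set \<Rightarrow> ('a, 'v) vpb \<Rightarrow> bool" where
  "is_vpb X DX B \<longleftrightarrow> diffeology X DX \<and> diffeology (pb_tot B) (pb_diff B) \<and>
     smooth_betw (pb_tot B) (pb_diff B) X DX (pb_proj B) \<and> pb_proj B ` pb_tot B = X \<and>
     (\<forall>x\<in>X. vector_space_on (fib B x) (pb_add B) (pb_smul B) (pb_zero B x)) \<and>
     smooth_betw (fibprod B B) (fibprod_diff B B) (pb_tot B) (pb_diff B) (\<lambda>(v, w). pb_add B v w) \<and>
     smooth_betw (UNIV \<times> pb_tot B) (prod_diff real_diff (pb_diff B)) (pb_tot B) (pb_diff B)
        (\<lambda>(c, v). pb_smul B c v) \<and>
     smooth_betw X DX (pb_tot B) (pb_diff B) (pb_zero B)"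

definition lincomb :: "('a, 'v) vpb \<Rightarrow> 'a \<Rightarrow> real list \<Rightarrow> 'v list \<Rightarrow> 'v" where
  "lincomb B x cs vs = foldr (\<lambda>(c, w) acc. pb_add B (pb_smul B c w) acc) (zip cs vs) (pb_zero B x)"

definition fin_dim_vpb :: "'a set \<Rightarrow> ('a, 'v) vpb \<Rightarrow> bool" where
  "fin_dim_vpb X B \<longleftrightarrow> (\<forall>x\<in>X. \<exists>vs. set vs \<subseteq> fib B x \<and>
      (\<forall>v\<in>fib B x. \<exists>cs. length cs = length vs \<and> v = lincomb B x cs vs))"

definition dsum :: "('a, 'v) vpb \<Rightarrow> ('a, 'w) vpb \<Rightarrow> ('a, 'v \<times> 'w) vpb" where
  "dsum B C = \<lparr> pb_tot = fibprod B C, pb_diff = fibprod_diff B C,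
     pb_proj = (\<lambda>(v, w). pb_proj B v),
     pb_add = (\<lambda>(v, w) (v', w'). (pb_add B v v', pb_add C w w')),
     pb_smul = (\<lambda>c (v, w). (pb_smul B c v, pb_smul C c w)),
     pb_zero = (\<lambda>x. (pb_zero B x, pb_zero C x)) \<rparr>"

definition Incl1 :: "('a, 'v) vpb \<Rightarrow> ('a, 'w) vpb \<Rightarrow> 'v \<Rightarrow> 'v \<times> 'w" where
  "Incl1 B C v = (v, pb_zero C (pb_proj B v))"

definition Incl2 :: "('a, 'v) vpb \<Rightarrow> ('a, 'w) vpb \<Rightarrow> 'w \<Rightarrow> 'v \<times> 'w" where
  "Incl2 B C w = (pb_zero B (pb_proj C w), w)"

text \<open>A 1-form assigns to each plot (n,U,p) the coefficient vector (first n entries)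
  of an ordinary 1-form on U.\<close>
type_synonym 'a form1 = "'a plot \<Rightarrow> rv \<Rightarrow> rv"

definition Omega1 :: "'a plot set \<Rightarrow> 'a form1 set" where
  "Omega1 DX = {\<omega>. \<omega> \<in> extensional DX \<and>
     (\<forall>(n,U,p)\<in>DX. \<omega> (n,U,p) \<in> extensional U \<and> (\<forall>u\<in>U. \<omega> (n,U,p) u \<in> Rn n) \<and>
        (\<forall>i<n. smooth_fn n U (\<lambda>u. \<omega> (n,U,p) u i))) \<and>
     (\<forall>(n,U,p)\<in>DX. \<forall>m W F. open_in_Rn m W \<and> smooth_map m W n F \<and> F ` W \<subseteq> U \<longrightarrow>
        (\<forall>w\<in>W. \<forall>j<m. \<omega> (plot_of m W (p \<circ> F)) w j =
            (\<Sum>i<n. \<omega> (n,U,p) (F w) i * pd j (\<lambda>v. F v i) w)))}"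

definition form_lin :: "'a plot set \<Rightarrow> real \<Rightarrow> 'a form1 \<Rightarrow> real \<Rightarrow> 'a form1 \<Rightarrow> 'a form1" where
  "form_lin DX a \<omega> b \<eta> = restrict (\<lambda>P. restrict (\<lambda>u i. a * \<omega> P u i + b * \<eta> P u i) (fst (snd P))) DX"

definition zero_form :: "'a plot set \<Rightarrow> 'a form1" where
  "zero_form DX = restrict (\<lambda>P. restrict (\<lambda>u i. 0) (fst (snd P))) DX"

definition Omega1_diff :: "'a plot set \<Rightarrow> 'a form1 plot set" where
  "Omega1_diff DX = {(m,W,q). open_in_Rn m W \<and> q = restrict q W \<and> q ` W \<subseteq> Omega1 DX \<and>
     (\<forall>(n,U,p)\<in>DX. \<forall>i<n. smooth_fn (m + n) (joinset m W U)
        (\<lambda>z. q (fpart m z) (n,U,p) (spart m z) i))}"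

definition vanishes_at :: "'a plot set \<Rightarrow> 'a \<Rightarrow> 'a form1 \<Rightarrow> bool" where
  "vanishes_at DX x \<omega> \<longleftrightarrow> (\<forall>(n,U,p)\<in>DX. (\<lambda>_. 0) \<in> U \<and> p (\<lambda>_. 0) = x \<longrightarrow>
      \<omega> (n,U,p) (\<lambda>_. 0) = (\<lambda>_. 0))"

type_synonym 'a lam = "'a \<times> 'a form1 set"

definition lcls :: "'a plot set \<Rightarrow> 'a \<Rightarrow> 'a form1 \<Rightarrow> 'a lam" where
  "lcls DX x \<omega> = (x, {\<eta> \<in> Omega1 DX. vanishes_at DX x (form_lin DX 1 \<eta> (-1) \<omega>)})"

definition Lam1 :: "'a set \<Rightarrow> 'a plot set \<Rightarrow> ('a, 'a lam) vpb" where
  "Lam1 X DX = \<lparr> pb_tot = (\<lambda>(x, \<omega>). lcls DX x \<omega>) ` (X \<times> Omega1 DX),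
     pb_diff = quot_diff (prod_diff (subset_diff DX X) (Omega1_diff DX)) (\<lambda>(x, \<omega>). lcls DX x \<omega>),
     pb_proj = fst,
     pb_add = (\<lambda>(x, c) (y, d). lcls DX x (form_lin DX 1 (SOME \<omega>. \<omega> \<in> c) 1 (SOME \<eta>. \<eta> \<in> d))),
     pb_smul = (\<lambda>a (x, c). lcls DX x (form_lin DX a (SOME \<omega>. \<omega> \<in> c) 0 (SOME \<omega>. \<omega> \<in> c))),
     pb_zero = (\<lambda>x. lcls DX x (zero_form DX)) \<rparr>"

definition dform :: "'a plot set \<Rightarrow> ('a \<Rightarrow> real) \<Rightarrow> 'a form1" where
  "dform DX h = restrict (\<lambda>(n,U,p). restrict (\<lambda>u i. if i < n then pd i (h \<circ> p) u else 0) U) DX"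

type_synonym ('a, 'l, 'v) tens = "'a \<times> (('l \<times> 'v) \<Rightarrow> real) set"

definition fsf :: "('a, 'l) vpb \<Rightarrow> ('a, 'v) vpb \<Rightarrow> 'a \<Rightarrow> (('l \<times> 'v) \<Rightarrow> real) set" where
  "fsf L B x = {f. finite {z. f z \<noteq> 0} \<and> (\<forall>z. f z \<noteq> 0 \<longrightarrow> fst z \<in> fib L x \<and> snd z \<in> fib B x)}"

definition delta :: "'z \<Rightarrow> 'z \<Rightarrow> real" where
  "delta z = (\<lambda>w. if w = z then 1 else 0)"

definition tgens :: "('a, 'l) vpb \<Rightarrow> ('a, 'v) vpb \<Rightarrow> 'a \<Rightarrow> (('l \<times> 'v) \<Rightarrow> real) set" where
  "tgens L B x = {f. \<exists>a\<in>fib L x. \<exists>a'\<in>fib L x. \<exists>b\<in>fib B x. \<exists>b'\<in>fib B x. \<exists>c.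
      f = (\<lambda>w. delta (pb_add L a a', b) w - delta (a, b) w - delta (a', b) w) \<or>
      f = (\<lambda>w. delta (a, pb_add B b b') w - delta (a, b) w - delta (a, b') w) \<or>
      f = (\<lambda>w. delta (pb_smul L c a, b) w - c * delta (a, b) w) \<or>
      f = (\<lambda>w. delta (a, pb_smul B c b) w - c * delta (a, b) w)}"

definition rel_sub :: "('a, 'l) vpb \<Rightarrow> ('a, 'v) vpb \<Rightarrow> 'a \<Rightarrow> (('l \<times> 'v) \<Rightarrow> real) set" where
  "rel_sub L B x = \<Inter> {S. (\<lambda>_. 0) \<in> S \<and> tgens L B x \<subseteq> S \<and>
      (\<forall>f\<in>S. \<forall>g\<in>S. (\<lambda>w. f w + g w) \<in> S) \<and> (\<forall>f\<in>S. \<forall>c. (\<lambda>w. c * f w) \<in> S)}"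

definition tcls :: "('a, 'l) vpb \<Rightarrow> ('a, 'v) vpb \<Rightarrow> 'a \<Rightarrow> (('l \<times> 'v) \<Rightarrow> real) \<Rightarrow> ('a, 'l, 'v) tens" where
  "tcls L B x f = (x, {g \<in> fsf L B x. (\<lambda>w. g w - f w) \<in> rel_sub L B x})"

definition tens :: "('a, 'l) vpb \<Rightarrow> ('a, 'v) vpb \<Rightarrow> 'l \<Rightarrow> 'v \<Rightarrow> ('a, 'l, 'v) tens" where
  "tens L B a b = tcls L B (pb_proj L a) (delta (a, b))"

definition tensor_pre :: "'a set \<Rightarrow> ('a, 'l) vpb \<Rightarrow> ('a, 'v) vpb \<Rightarrow> ('a, ('a, 'l, 'v) tens) vpb" where
  "tensor_pre X L B = \<lparr> pb_tot = {tcls L B x f | x f. x \<in> X \<and> f \<in> fsf L B x},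
     pb_diff = {},
     pb_proj = fst,
     pb_add = (\<lambda>(x, T) (y, T'). tcls L B x (\<lambda>w. (SOME f. f \<in> T) w + (SOME g. g \<in> T') w)),
     pb_smul = (\<lambda>c (x, T). tcls L B x (\<lambda>w. c * (SOME f. f \<in> T) w)),
     pb_zero = (\<lambda>x. tcls L B x (\<lambda>_. 0)) \<rparr>"

definition tensor_bundle :: "'a set \<Rightarrow> 'a plot set \<Rightarrow> ('a, 'l) vpb \<Rightarrow> ('a, 'v) vpb \<Rightarrow> ('a, ('a, 'l, 'v) tens) vpb" where
  "tensor_bundle X DX L B = (tensor_pre X L B) \<lparr> pb_diff :=
     \<Inter> {D. is_vpb X DX ((tensor_pre X L B) \<lparr> pb_diff := D \<rparr>) \<and>
           (\<forall>(n,U,p)\<in>fibprod_diff L B. plot_of n U (\<lambda>u. tens L B (fst (p u)) (snd (p u))) \<in> D)} \<rparr>"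

text \<open>Id \<otimes> g on Lambda \<otimes> B -> Lambda \<otimes> B', induced by a fibrewise linear g : B -> B'\<close>
definition tmap_id :: "('a, 'l) vpb \<Rightarrow> ('a, 'w) vpb \<Rightarrow> ('v \<Rightarrow> 'w) \<Rightarrow> ('a, 'l, 'v) tens \<Rightarrow> ('a, 'l, 'w) tens" where
  "tmap_id L B' g = (\<lambda>(x, T). tcls L B' x (\<lambda>(l, w').
      (\<Sum>z\<in>{z. (SOME f. f \<in> T) z \<noteq> 0 \<and> fst z = l \<and> g (snd z) = w'}. (SOME f. f \<in> T) z)))"

definition sections :: "'a set \<Rightarrow> 'a plot set \<Rightarrow> ('a, 'v) vpb \<Rightarrow> ('a \<Rightarrow> 'v) set" where
  "sections X DX B = {s. s \<in> extensional X \<and> smooth_betw X DX (pb_tot B) (pb_diff B) s \<and>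
      (\<forall>x\<in>X. pb_proj B (s x) = x)}"

definition sec_diff :: "'a set \<Rightarrow> 'a plot set \<Rightarrow> ('a, 'v) vpb \<Rightarrow> ('a \<Rightarrow> 'v) plot set" where
  "sec_diff X DX B = func_diff DX (pb_diff B) (sections X DX B)"

definition sec_add :: "'a set \<Rightarrow> ('a, 'v) vpb \<Rightarrow> ('a \<Rightarrow> 'v) \<Rightarrow> ('a \<Rightarrow> 'v) \<Rightarrow> ('a \<Rightarrow> 'v)" where
  "sec_add X B s t = restrict (\<lambda>x. pb_add B (s x) (t x)) X"

definition sec_smul :: "'a set \<Rightarrow> ('a, 'v) vpb \<Rightarrow> real \<Rightarrow> ('a \<Rightarrow> 'v) \<Rightarrow> ('a \<Rightarrow> 'v)" where
  "sec_smul X B c s = restrict (\<lambda>x. pb_smul B c (s x)) X"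

definition is_connection :: "'a set \<Rightarrow> 'a plot set \<Rightarrow> ('a, 'v) vpb \<Rightarrow>
    (('a \<Rightarrow> 'v) \<Rightarrow> ('a \<Rightarrow> ('a, 'a lam, 'v) tens)) \<Rightarrow> bool" where
  "is_connection X DX B N \<longleftrightarrow>
     (let L = Lam1 X DX; T = tensor_bundle X DX L B in
       (\<forall>s\<in>sections X DX B. N s \<in> sections X DX T) \<and>
       (\<forall>s\<in>sections X DX B. \<forall>t\<in>sections X DX B. N (sec_add X B s t) = sec_add X T (N s) (N t)) \<and>
       (\<forall>c. \<forall>s\<in>sections X DX B. N (sec_smul X B c s) = sec_smul X T c (N s)) \<and>
       smooth_betw (sections X DX B) (sec_diff X DX B) (sections X DX T) (sec_diff X DX T) N \<and>
       (\<forall>h. \<forall>s\<in>sections X DX B. smooth_betw X DX UNIV real_diff h \<longrightarrow>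
          N (restrict (\<lambda>x. pb_smul B (h x) (s x)) X) =
          restrict (\<lambda>x. pb_add T (tens L B (lcls DX x (dform DX h)) (s x)) (pb_smul T (h x) (N s x))) X))"

definition conn_sum :: "'a set \<Rightarrow> 'a plot set \<Rightarrow> ('a, 'v) vpb \<Rightarrow> ('a, 'w) vpb \<Rightarrow>
    (('a \<Rightarrow> 'v) \<Rightarrow> ('a \<Rightarrow> ('a, 'a lam, 'v) tens)) \<Rightarrow>
    (('a \<Rightarrow> 'w) \<Rightarrow> ('a \<Rightarrow> ('a, 'a lam, 'w) tens)) \<Rightarrow>
    (('a \<Rightarrow> 'v \<times> 'w) \<Rightarrow> ('a \<Rightarrow> ('a, 'a lam, 'v \<times> 'w) tens))" where
  "conn_sum X DX B1 B2 N1 N2 s =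
     (let L = Lam1 X DX; T = tensor_bundle X DX L (dsum B1 B2) in
      restrict (\<lambda>x. pb_add T
         (tmap_id L (dsum B1 B2) (Incl1 B1 B2) (N1 (restrict (fst \<circ> s) X) x))
         (tmap_id L (dsum B1 B2) (Incl2 B1 B2) (N2 (restrict (snd \<circ> s) X) x))) X)"

end

theory Submission
  imports Defs
begin

(* Linearity and the Leibniz
   rule then come from those of the two connections, fibrewise linearity of Id (x) Incl_i and
   the identity l (x) Incl_1 v + l (x) Incl_2 w = l (x) (v, w).
   The diffeological content is smoothness of Id (x) g for a smooth fibrewise linear g: the
   tensor product diffeology is the finest vector pseudo-bundle diffeology containing the plots
   u |-> p u (x) q u, so it suffices that the pullback of the target diffeology along Id (x) g is
   again such a diffeology. The analytic input, that dh is a diffeological 1-form, is a chain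
   rule for partial derivatives. *)

lemma vector_space_onD:
  assumes "vector_space_on F add smul z"
  shows "z \<in> F" "\<And>v w. v \<in> F \<Longrightarrow> w \<in> F \<Longrightarrow> add v w \<in> F"
    "\<And>c v. v \<in> F \<Longrightarrow> smul c v \<in> F"
    "\<And>u v w. u \<in> F \<Longrightarrow> v \<in> F \<Longrightarrow> w \<in> F \<Longrightarrow> add (add u v) w = add u (add v w)"
    "\<And>v w. v \<in> F \<Longrightarrow> w \<in> F \<Longrightarrow> add v w = add w v"
    "\<And>v. v \<in> F \<Longrightarrow> add z v = v"
    "\<And>v. v \<in> F \<Longrightarrow> \<exists>w\<in>F. add v w = z"
    "\<And>c v w. v \<in> F \<Longrightarrow> w \<in> F \<Longrightarrow> smul c (add v w) = add (smul c v) (smul c w)"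
    "\<And>a b v. v \<in> F \<Longrightarrow> smul (a + b) v = add (smul a v) (smul b v)"
    "\<And>a b v. v \<in> F \<Longrightarrow> smul a (smul b v) = smul (a * b) v"
    "\<And>v. v \<in> F \<Longrightarrow> smul 1 v = v"
  using assms unfolding vector_space_on_def by auto

lemma vector_space_on_add_zero_right:
  assumes "vector_space_on F add smul z" "v \<in> F"
  shows "add v z = v"
  using vector_space_onD[OF assms(1)] assms(2) by metis

lemma vector_space_on_add_left_cancel:
  assumes "vector_space_on F add smul z" "u \<in> F" "v \<in> F" "w \<in> F" "add u v = add u w"
  shows "v = w"
proof -
  note vs = vector_space_onD[OF assms(1)]
  obtain u' where u': "u' \<in> F" "add u u' = z" using vs(7) assms(2) by blast
  then have "add u' u = z" using vs(5) assms(2) by simp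
  then have "add (add u' u) v = add (add u' u) w"
    using assms(5) vs(4) u'(1) assms(2-4) by metis
  then show ?thesis using \<open>add u' u = z\<close> vs(6) assms(3,4) by simp
qed

lemma vector_space_on_smul_zero:
  assumes "vector_space_on F add smul z"
  shows "smul c z = z"
proof -
  note vs = vector_space_onD[OF assms]
  have cz: "smul c z \<in> F" using vs(1,3) by blast
  have "add (smul c z) (smul c z) = smul c (add z z)" using vs(1,8) by simp
  also have "\<dots> = add (smul c z) z" using vs(1,6) vector_space_on_add_zero_right[OF assms cz] by simp
  finally show ?thesis using vector_space_on_add_left_cancel[OF assms cz cz vs(1)] by blast
qed

lemma vector_space_on_add_add_swap:
  assumes "vector_space_on F add smul z" "a \<in> F" "b \<in> F" "c \<in> F" "d \<in> F"
  shows "add (add a b) (add c d) = add (add a c) (add b d)"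
proof -
  note vs = vector_space_onD[OF assms(1)]
  have "add (add a b) (add c d) = add a (add (add b c) d)" using vs assms by simp
  also have "add b c = add c b" using vs assms by simp
  finally show ?thesis using vs assms by simp
qed

section \<open>Tensor products of fibres\<close>

definition lin_closed :: "('z \<Rightarrow> real) set \<Rightarrow> bool" where
  "lin_closed S \<longleftrightarrow> (\<lambda>_. 0) \<in> S \<and> (\<forall>f\<in>S. \<forall>g\<in>S. (\<lambda>w. f w + g w) \<in> S) \<and> (\<forall>f\<in>S. \<forall>c. (\<lambda>w. c * f w) \<in> S)"

lemma rel_sub_minimal:
  assumes "f \<in> rel_sub L B x" "lin_closed S" "tgens L B x \<subseteq> S"
  shows "f \<in> S"
  using assms unfolding rel_sub_def lin_closed_def by blast

lemma rel_sub_tgens: "tgens L B x \<subseteq> rel_sub L B x"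
  unfolding rel_sub_def by blast

lemma rel_sub_zero: "(\<lambda>_. 0) \<in> rel_sub L B x"
  unfolding rel_sub_def by blast

lemma rel_sub_add: "f \<in> rel_sub L B x \<Longrightarrow> g \<in> rel_sub L B x \<Longrightarrow> (\<lambda>w. f w + g w) \<in> rel_sub L B x"
  unfolding rel_sub_def by blast

lemma rel_sub_smul: "f \<in> rel_sub L B x \<Longrightarrow> (\<lambda>w. c * f w) \<in> rel_sub L B x"
  unfolding rel_sub_def by blast

lemma rel_sub_uminus: "f \<in> rel_sub L B x \<Longrightarrow> (\<lambda>w. - f w) \<in> rel_sub L B x"
  using rel_sub_smul[of f L B x "-1"] by simp

lemma rel_sub_diff: "f \<in> rel_sub L B x \<Longrightarrow> g \<in> rel_sub L B x \<Longrightarrow> (\<lambda>w. f w - g w) \<in> rel_sub L B x"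
  using rel_sub_add[OF _ rel_sub_uminus, of f L B x g] by simp

definition fin_supp :: "('z \<Rightarrow> real) set" where
  "fin_supp = {f. finite {z. f z \<noteq> 0}}"

lemma fin_supp_lin_closed: "lin_closed fin_supp"
proof -
  have "finite {z. f z + g z \<noteq> 0}" if "finite {z. f z \<noteq> 0}" "finite {z. g z \<noteq> 0}"
    for f g :: "'z \<Rightarrow> real"
    by (rule finite_subset[of _ "{z. f z \<noteq> 0} \<union> {z. g z \<noteq> 0}"]) (use that in auto)
  then show ?thesis unfolding lin_closed_def fin_supp_def by auto
qed

lemma fin_supp_add: "f \<in> fin_supp \<Longrightarrow> g \<in> fin_supp \<Longrightarrow> (\<lambda>w. f w + g w) \<in> fin_supp"
  and fin_supp_smul: "f \<in> fin_supp \<Longrightarrow> (\<lambda>w. c * f w) \<in> fin_supp"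
  using fin_supp_lin_closed unfolding lin_closed_def by blast+

lemma fin_supp_diff: "f \<in> fin_supp \<Longrightarrow> g \<in> fin_supp \<Longrightarrow> (\<lambda>w. f w - g w) \<in> fin_supp"
  using fin_supp_add[OF _ fin_supp_smul[of g "-1"], of f] by simp

lemma fin_supp_delta: "delta z \<in> fin_supp"
  unfolding fin_supp_def delta_def by simp

lemma fsf_fin_supp: "f \<in> fsf L B x \<Longrightarrow> f \<in> fin_supp"
  unfolding fsf_def fin_supp_def by simp

lemma fsf_zero: "(\<lambda>_. 0) \<in> fsf L B x"
  unfolding fsf_def by simp

lemma fsf_add: "f \<in> fsf L B x \<Longrightarrow> g \<in> fsf L B x \<Longrightarrow> (\<lambda>w. f w + g w) \<in> fsf L B x"
proof -
  assume "f \<in> fsf L B x" "g \<in> fsf L B x"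
  moreover have "f z \<noteq> 0 \<or> g z \<noteq> 0" if "f z + g z \<noteq> 0" for z
    using that by auto
  ultimately show ?thesis
    using fin_supp_add[of f g] unfolding fsf_def fin_supp_def by blast
qed

lemma fsf_smul: "f \<in> fsf L B x \<Longrightarrow> (\<lambda>w. c * f w) \<in> fsf L B x"
  using fin_supp_smul[of f c] unfolding fsf_def fin_supp_def by auto

lemma fsf_delta: "a \<in> fib L x \<Longrightarrow> b \<in> fib B x \<Longrightarrow> delta (a, b) \<in> fsf L B x"
  unfolding fsf_def delta_def by auto

lemma tcls_eqI:
  assumes "(\<lambda>w. f w - g w) \<in> rel_sub L B x"
  shows "tcls L B x f = tcls L B x g"
proof -
  have "(\<lambda>w. h w - f w) \<in> rel_sub L B x \<longleftrightarrow> (\<lambda>w. h w - g w) \<in> rel_sub L B x" for h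
    using rel_sub_add[OF _ assms, of "\<lambda>w. h w - f w"] rel_sub_diff[OF _ assms, of "\<lambda>w. h w - g w"]
    by auto
  then show ?thesis unfolding tcls_def by auto
qed

text \<open>The operations of \<open>tensor_pre\<close> and \<open>tmap_id\<close> act on a \<open>SOME\<close>-chosen representative of a
  class; this lemma is what makes them independent of the choice.\<close>

lemma tcls_some:
  assumes "f \<in> fsf L B x"
  shows "(SOME g. g \<in> snd (tcls L B x f)) \<in> fsf L B x"
    "(\<lambda>w. (SOME g. g \<in> snd (tcls L B x f)) w - f w) \<in> rel_sub L B x"
proof -
  have "f \<in> snd (tcls L B x f)" using assms rel_sub_zero unfolding tcls_def by simp
  then have "(SOME g. g \<in> snd (tcls L B x f)) \<in> snd (tcls L B x f)" by (rule someI[of "\<lambda>g. g \<in> _"])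
  then show "(SOME g. g \<in> snd (tcls L B x f)) \<in> fsf L B x"
    "(\<lambda>w. (SOME g. g \<in> snd (tcls L B x f)) w - f w) \<in> rel_sub L B x"
    unfolding tcls_def by auto
qed

lemma tcls_pair: "tcls L B x f = (x, snd (tcls L B x f))"
  unfolding tcls_def by simp

lemma fst_tcls [simp]: "fst (tcls L B x f) = x"
  unfolding tcls_def by simp

lemma tensor_pre_simps [simp]:
  "pb_proj (tensor_pre X L B) = fst"
  "pb_zero (tensor_pre X L B) = (\<lambda>x. tcls L B x (\<lambda>_. 0))"
  unfolding tensor_pre_def by simp_all

lemma tensor_pre_add:
  assumes "f \<in> fsf L B x" "g \<in> fsf L B x"
  shows "pb_add (tensor_pre X L B) (tcls L B x f) (tcls L B x g) = tcls L B x (\<lambda>w. f w + g w)"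
proof -
  have "pb_add (tensor_pre X L B) (tcls L B x f) (tcls L B x g) =
     tcls L B x (\<lambda>w. (SOME h. h \<in> snd (tcls L B x f)) w + (SOME h. h \<in> snd (tcls L B x g)) w)"
    by (subst (1 2) tcls_pair) (simp add: tensor_pre_def)
  also have "\<dots> = tcls L B x (\<lambda>w. f w + g w)"
    using rel_sub_add[OF tcls_some(2)[OF assms(1)] tcls_some(2)[OF assms(2)]]
    by (intro tcls_eqI) (simp add: algebra_simps)
  finally show ?thesis .
qed

lemma tensor_pre_smul:
  assumes "f \<in> fsf L B x"
  shows "pb_smul (tensor_pre X L B) c (tcls L B x f) = tcls L B x (\<lambda>w. c * f w)"
proof -
  have "pb_smul (tensor_pre X L B) c (tcls L B x f) =
     tcls L B x (\<lambda>w. c * (SOME h. h \<in> snd (tcls L B x f)) w)"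
    by (subst tcls_pair) (simp add: tensor_pre_def)
  also have "\<dots> = tcls L B x (\<lambda>w. c * f w)"
    using rel_sub_smul[OF tcls_some(2)[OF assms], of c]
    by (intro tcls_eqI) (simp add: algebra_simps)
  finally show ?thesis .
qed

lemma fib_tensor_pre:
  "x \<in> X \<Longrightarrow> fib (tensor_pre X L B) x = tcls L B x ` fsf L B x"
  unfolding fib_def tensor_pre_def by auto

lemma vector_space_on_tensor_pre:
  assumes "x \<in> X"
  shows "vector_space_on (fib (tensor_pre X L B) x) (pb_add (tensor_pre X L B))
           (pb_smul (tensor_pre X L B)) (pb_zero (tensor_pre X L B) x)"
proof -
  have neg: "\<exists>g\<in>fsf L B x. pb_add (tensor_pre X L B) (tcls L B x f) (tcls L B x g) = tcls L B x (\<lambda>_. 0)"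
    if "f \<in> fsf L B x" for f
    using that fsf_smul[OF that, of "-1"] tensor_pre_add[OF that fsf_smul[OF that, of "-1"]]
    by (intro bexI[of _ "\<lambda>w. -1 * f w"]) simp_all
  show ?thesis
    unfolding fib_tensor_pre[OF assms] vector_space_on_def ball_simps bex_simps
    using neg by (auto simp: tensor_pre_add tensor_pre_smul fsf_zero fsf_add fsf_smul
        algebra_simps intro!: imageI)
qed

section \<open>Tensoring a fibrewise linear map with the identity\<close>

text \<open>\<open>push g\<close> is \<open>Id \<otimes> g\<close> on formal sums: the coefficient of \<open>(l, w')\<close> collects the
  coefficients of all \<open>(l, b)\<close> with \<open>g b = w'\<close>.\<close>

definition push :: "('v \<Rightarrow> 'w) \<Rightarrow> (('l \<times> 'v) \<Rightarrow> real) \<Rightarrow> (('l \<times> 'w) \<Rightarrow> real)" where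
  "push g f = (\<lambda>(l, w'). \<Sum>z\<in>{z. f z \<noteq> 0 \<and> fst z = l \<and> g (snd z) = w'}. f z)"

definition fib_linear :: "('a, 'v) vpb \<Rightarrow> ('a, 'w) vpb \<Rightarrow> ('v \<Rightarrow> 'w) \<Rightarrow> 'a \<Rightarrow> bool" where
  "fib_linear B B' g x \<longleftrightarrow> (\<forall>b\<in>fib B x. g b \<in> fib B' x) \<and>
     (\<forall>b\<in>fib B x. \<forall>b'\<in>fib B x. g (pb_add B b b') = pb_add B' (g b) (g b')) \<and>
     (\<forall>c. \<forall>b\<in>fib B x. g (pb_smul B c b) = pb_smul B' c (g b))"

lemma fib_linearD:
  assumes "fib_linear B B' g x"
  shows "\<And>b. b \<in> fib B x \<Longrightarrow> g b \<in> fib B' x"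
    "\<And>b b'. b \<in> fib B x \<Longrightarrow> b' \<in> fib B x \<Longrightarrow> g (pb_add B b b') = pb_add B' (g b) (g b')"
    "\<And>c b. b \<in> fib B x \<Longrightarrow> g (pb_smul B c b) = pb_smul B' c (g b)"
  using assms unfolding fib_linear_def by blast+

lemma tmap_id_eq: "tmap_id L B' g (x, T) = tcls L B' x (push g (SOME f. f \<in> T))"
  unfolding tmap_id_def push_def by simp

lemma push_eq_sum:
  assumes "finite S" "{z. f z \<noteq> 0} \<subseteq> S"
  shows "push g f (l, w') = sum f {z\<in>S. fst z = l \<and> g (snd z) = w'}"
  unfolding push_def using assms by (auto intro!: sum.mono_neutral_left)

lemma push_add:
  assumes "f \<in> fin_supp" "h \<in> fin_supp"
  shows "push g (\<lambda>w. f w + h w) = (\<lambda>z. push g f z + push g h z)"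
proof (rule ext, clarify)
  fix l w'
  let ?S = "{z. f z \<noteq> 0} \<union> {z. h z \<noteq> 0}"
  have fin: "finite ?S" using assms unfolding fin_supp_def by simp
  have "push g (\<lambda>w. f w + h w) (l, w') = (\<Sum>z\<in>{z\<in>?S. fst z = l \<and> g (snd z) = w'}. f z + h z)"
    by (rule push_eq_sum[OF fin]) auto
  then show "push g (\<lambda>w. f w + h w) (l, w') = push g f (l, w') + push g h (l, w')"
    by (simp add: sum.distrib push_eq_sum[OF fin])
qed

lemma push_smul:
  assumes "f \<in> fin_supp"
  shows "push g (\<lambda>w. c * f w) = (\<lambda>z. c * push g f z)"
proof (rule ext, clarify)
  fix l w'
  let ?S = "{z. f z \<noteq> 0}"
  have fin: "finite ?S" using assms unfolding fin_supp_def by simp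
  have "push g (\<lambda>w. c * f w) (l, w') = (\<Sum>z\<in>{z\<in>?S. fst z = l \<and> g (snd z) = w'}. c * f z)"
    by (rule push_eq_sum[OF fin]) auto
  then show "push g (\<lambda>w. c * f w) (l, w') = c * push g f (l, w')"
    by (simp add: sum_distrib_left push_eq_sum[OF fin])
qed

lemma push_diff:
  assumes "f \<in> fin_supp" "h \<in> fin_supp"
  shows "push g (\<lambda>w. f w - h w) = (\<lambda>z. push g f z - push g h z)"
proof -
  have "push g (\<lambda>w. f w - h w) = push g (\<lambda>w. f w + (- 1) * h w)" by simp
  also have "\<dots> = (\<lambda>z. push g f z - push g h z)"
    unfolding push_add[OF assms(1) fin_supp_smul[OF assms(2)]] push_smul[OF assms(2)] by simp
  finally show ?thesis .
qed

lemma push_zero: "push g (\<lambda>_. 0) = (\<lambda>_. 0)"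
  unfolding push_def by (rule ext) (simp add: split_beta)

lemma push_delta: "push g (delta (a, b)) = delta (a, g b)"
proof (rule ext, clarify)
  fix l w'
  have "push g (delta (a, b)) (l, w') = sum (delta (a, b)) {z\<in>{(a,b)}. fst z = l \<and> g (snd z) = w'}"
    by (rule push_eq_sum) (auto simp: delta_def)
  also have "{z\<in>{(a,b)}. fst z = l \<and> g (snd z) = w'} = (if l = a \<and> w' = g b then {(a,b)} else {})"
    by auto
  finally show "push g (delta (a, b)) (l, w') = delta (a, g b) (l, w')"
    by (simp add: delta_def)
qed

lemma push_nonzeroE:
  assumes "push g f (l, w') \<noteq> 0"
  obtains z where "f z \<noteq> 0" "fst z = l" "g (snd z) = w'"
proof -
  have "(\<Sum>z\<in>{z. f z \<noteq> 0 \<and> fst z = l \<and> g (snd z) = w'}. f z) \<noteq> 0"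
    using assms unfolding push_def by simp
  then obtain z where "z \<in> {z. f z \<noteq> 0 \<and> fst z = l \<and> g (snd z) = w'}"
    by (rule sum.not_neutral_contains_not_neutral)
  then show ?thesis using that by blast
qed

lemma push_fin_supp:
  assumes "f \<in> fin_supp"
  shows "push g f \<in> fin_supp"
proof -
  have "{z. push g f z \<noteq> 0} \<subseteq> (\<lambda>z. (fst z, g (snd z))) ` {z. f z \<noteq> 0}"
  proof clarify
    fix l w' assume "push g f (l, w') \<noteq> 0"
    then obtain y where "f y \<noteq> 0" "fst y = l" "g (snd y) = w'" by (rule push_nonzeroE)
    then show "(l, w') \<in> (\<lambda>z. (fst z, g (snd z))) ` {z. f z \<noteq> 0}"
      by (intro image_eqI[of _ _ y]) auto
  qed
  moreover have "finite {z. f z \<noteq> 0}" using assms unfolding fin_supp_def by simp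
  ultimately show ?thesis unfolding fin_supp_def by (simp add: finite_subset)
qed

lemma push_fsf:
  assumes lin: "fib_linear B B' g x" and f: "f \<in> fsf L B x"
  shows "push g f \<in> fsf L B' x"
proof -
  have "fst z \<in> fib L x \<and> snd z \<in> fib B' x" if nz: "push g f z \<noteq> 0" for z
  proof -
    obtain l w' where z: "z = (l, w')" by (cases z)
    obtain y where y: "f y \<noteq> 0" "fst y = l" "g (snd y) = w'"
      using nz unfolding z by (rule push_nonzeroE)
    have "fst y \<in> fib L x" "snd y \<in> fib B x" using f y(1) unfolding fsf_def mem_Collect_eq by blast+
    then show ?thesis using lin y(2,3) unfolding z fib_linear_def by auto
  qed
  moreover have "finite {z. push g f z \<noteq> 0}"
    using push_fin_supp[OF fsf_fin_supp[OF f], of g] unfolding fin_supp_def by simp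
  ultimately show ?thesis unfolding fsf_def mem_Collect_eq by blast
qed

lemma tgens_add_left: "a \<in> fib L x \<Longrightarrow> a' \<in> fib L x \<Longrightarrow> b \<in> fib B x \<Longrightarrow>
  (\<lambda>w. delta (pb_add L a a', b) w - delta (a, b) w - delta (a', b) w) \<in> tgens L B x"
  unfolding tgens_def mem_Collect_eq
  by (rule bexI[of _ a], rule bexI[of _ a'], rule bexI[of _ b], rule bexI[of _ b], rule exI[of _ 0],
      rule disjI1, rule refl, assumption+)

lemma tgens_add_right: "a \<in> fib L x \<Longrightarrow> b \<in> fib B x \<Longrightarrow> b' \<in> fib B x \<Longrightarrow>
  (\<lambda>w. delta (a, pb_add B b b') w - delta (a, b) w - delta (a, b') w) \<in> tgens L B x"
  unfolding tgens_def mem_Collect_eq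
  by (rule bexI[of _ a], rule bexI[of _ a], rule bexI[of _ b], rule bexI[of _ b'], rule exI[of _ 0],
      rule disjI2, rule disjI1, rule refl, assumption+)

lemma tgens_smul_left: "a \<in> fib L x \<Longrightarrow> b \<in> fib B x \<Longrightarrow>
  (\<lambda>w. delta (pb_smul L c a, b) w - c * delta (a, b) w) \<in> tgens L B x"
  unfolding tgens_def mem_Collect_eq
  by (rule bexI[of _ a], rule bexI[of _ a], rule bexI[of _ b], rule bexI[of _ b], rule exI[of _ c],
      rule disjI2, rule disjI2, rule disjI1, rule refl, assumption+)

lemma tgens_smul_right: "a \<in> fib L x \<Longrightarrow> b \<in> fib B x \<Longrightarrow>
  (\<lambda>w. delta (a, pb_smul B c b) w - c * delta (a, b) w) \<in> tgens L B x"
  unfolding tgens_def mem_Collect_eq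
  by (rule bexI[of _ a], rule bexI[of _ a], rule bexI[of _ b], rule bexI[of _ b], rule exI[of _ c],
      rule disjI2, rule disjI2, rule disjI2, rule refl, assumption+)

lemma push_delta_diff_diff:
  "push g (\<lambda>w. delta (a, b) w - delta (a', b') w - delta (a'', b'') w) =
   (\<lambda>w. delta (a, g b) w - delta (a', g b') w - delta (a'', g b'') w)"
  using push_diff[OF fin_supp_diff[OF fin_supp_delta fin_supp_delta] fin_supp_delta, of g "(a, b)" "(a', b')"]
    push_diff[OF fin_supp_delta fin_supp_delta, of g "(a, b)" "(a', b')"]
  by (simp add: push_delta)

lemma push_delta_diff_smul:
  "push g (\<lambda>w. delta (a, b) w - c * delta (a', b') w) = (\<lambda>w. delta (a, g b) w - c * delta (a', g b') w)"
  using push_diff[OF fin_supp_delta fin_supp_smul[OF fin_supp_delta], of g "(a, b)" c "(a', b')"]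
    push_smul[OF fin_supp_delta, of g c "(a', b')"]
  by (simp add: push_delta)

lemma push_tgens:
  assumes lin: "fib_linear B B' g x" and f: "f \<in> tgens L B x"
  shows "push g f \<in> tgens L B' x"
proof -
  note g = fib_linearD[OF lin]
  obtain a a' b b' c where ab: "a\<in>fib L x" "a'\<in>fib L x" "b\<in>fib B x" "b'\<in>fib B x" and
    "f = (\<lambda>w. delta (pb_add L a a', b) w - delta (a, b) w - delta (a', b) w) \<or>
      f = (\<lambda>w. delta (a, pb_add B b b') w - delta (a, b) w - delta (a, b') w) \<or>
      f = (\<lambda>w. delta (pb_smul L c a, b) w - c * delta (a, b) w) \<or>
      f = (\<lambda>w. delta (a, pb_smul B c b) w - c * delta (a, b) w)"
    using f unfolding tgens_def by blast
  then show ?thesis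
  proof (elim disjE)
    assume f: "f = (\<lambda>w. delta (pb_add L a a', b) w - delta (a, b) w - delta (a', b) w)"
    show ?thesis
      unfolding f push_delta_diff_diff by (rule tgens_add_left[OF ab(1,2) g(1)[OF ab(3)]])
  next
    assume f: "f = (\<lambda>w. delta (a, pb_add B b b') w - delta (a, b) w - delta (a, b') w)"
    show ?thesis
      unfolding f push_delta_diff_diff g(2)[OF ab(3,4)]
      by (rule tgens_add_right[OF ab(1) g(1)[OF ab(3)] g(1)[OF ab(4)]])
  next
    assume f: "f = (\<lambda>w. delta (pb_smul L c a, b) w - c * delta (a, b) w)"
    show ?thesis
      unfolding f push_delta_diff_smul by (rule tgens_smul_left[OF ab(1) g(1)[OF ab(3)]])
  next
    assume f: "f = (\<lambda>w. delta (a, pb_smul B c b) w - c * delta (a, b) w)"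
    show ?thesis
      unfolding f push_delta_diff_smul g(3)[OF ab(3)]
      by (rule tgens_smul_right[OF ab(1) g(1)[OF ab(3)]])
  qed
qed

lemma push_rel_sub:
  assumes lin: "fib_linear B B' g x" and f: "f \<in> rel_sub L B x"
  shows "push g f \<in> rel_sub L B' x"
proof -
  let ?S = "{f \<in> fin_supp. push g f \<in> rel_sub L B' x}"
  have "lin_closed ?S"
    unfolding lin_closed_def
    by (simp add: fin_supp_def[symmetric] push_zero rel_sub_zero push_add push_smul fin_supp_add
        fin_supp_smul rel_sub_add rel_sub_smul) (simp add: fin_supp_def)
  moreover have "tgens L B x \<subseteq> fin_supp"
    unfolding tgens_def by (auto simp: fin_supp_diff fin_supp_smul fin_supp_delta)
  then have "tgens L B x \<subseteq> ?S"
    using push_tgens[OF lin] rel_sub_tgens[of L B' x] by blast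
  ultimately show ?thesis using rel_sub_minimal[OF f] by blast
qed

lemma tmap_tcls:
  assumes lin: "fib_linear B B' g x" and f: "f \<in> fsf L B x"
  shows "tmap_id L B' g (tcls L B x f) = tcls L B' x (push g f)"
proof -
  let ?f' = "SOME h. h \<in> snd (tcls L B x f)"
  have "tmap_id L B' g (tcls L B x f) = tcls L B' x (push g ?f')"
    by (subst tcls_pair) (rule tmap_id_eq)
  also have "\<dots> = tcls L B' x (push g f)"
  proof (rule tcls_eqI)
    have "push g (\<lambda>w. ?f' w - f w) = (\<lambda>w. push g ?f' w - push g f w)"
      by (rule push_diff[OF fsf_fin_supp[OF tcls_some(1)[OF f]] fsf_fin_supp[OF f]])
    then show "(\<lambda>w. push g ?f' w - push g f w) \<in> rel_sub L B' x"
      using push_rel_sub[OF lin tcls_some(2)[OF f]] by simp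
  qed
  finally show ?thesis .
qed

lemma tensor_bundle_simps [simp]:
  "pb_tot (tensor_bundle X DX L B) = pb_tot (tensor_pre X L B)"
  "pb_proj (tensor_bundle X DX L B) = pb_proj (tensor_pre X L B)"
  "pb_add (tensor_bundle X DX L B) = pb_add (tensor_pre X L B)"
  "pb_smul (tensor_bundle X DX L B) = pb_smul (tensor_pre X L B)"
  "pb_zero (tensor_bundle X DX L B) = pb_zero (tensor_pre X L B)"
  unfolding tensor_bundle_def by simp_all

lemma fib_tensor_bundle [simp]: "fib (tensor_bundle X DX L B) x = fib (tensor_pre X L B) x"
  unfolding fib_def by simp

lemma fib_tensor_preE:
  assumes "x \<in> X" "v \<in> fib (tensor_pre X L B) x"
  obtains f where "v = tcls L B x f" "f \<in> fsf L B x"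
  using assms unfolding fib_tensor_pre[OF assms(1)] by blast

lemma tcls_in_fib_tensor_pre: "x \<in> X \<Longrightarrow> f \<in> fsf L B x \<Longrightarrow> tcls L B x f \<in> fib (tensor_pre X L B) x"
  by (simp add: fib_tensor_pre)

lemma tmap_fib:
  assumes "x \<in> X" "fib_linear B B' g x" "v \<in> fib (tensor_pre X L B) x"
  shows "tmap_id L B' g v \<in> fib (tensor_pre X L B') x"
proof -
  obtain f where f: "v = tcls L B x f" "f \<in> fsf L B x" using fib_tensor_preE[OF assms(1,3)] .
  show ?thesis unfolding f(1) tmap_tcls[OF assms(2) f(2)]
    by (rule tcls_in_fib_tensor_pre[OF assms(1) push_fsf[OF assms(2) f(2)]])
qed

lemma tmap_add:
  assumes "x \<in> X" "fib_linear B B' g x" "v \<in> fib (tensor_pre X L B) x" "w \<in> fib (tensor_pre X L B) x"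
  shows "tmap_id L B' g (pb_add (tensor_pre X L B) v w) =
         pb_add (tensor_pre X L B') (tmap_id L B' g v) (tmap_id L B' g w)"
proof -
  obtain f where f: "v = tcls L B x f" "f \<in> fsf L B x" using fib_tensor_preE[OF assms(1,3)] .
  obtain h where h: "w = tcls L B x h" "h \<in> fsf L B x" using fib_tensor_preE[OF assms(1,4)] .
  show ?thesis
    unfolding f(1) h(1) tensor_pre_add[OF f(2) h(2)] tmap_tcls[OF assms(2) fsf_add[OF f(2) h(2)]]
      tmap_tcls[OF assms(2) f(2)] tmap_tcls[OF assms(2) h(2)]
      tensor_pre_add[OF push_fsf[OF assms(2) f(2)] push_fsf[OF assms(2) h(2)]]
      push_add[OF fsf_fin_supp[OF f(2)] fsf_fin_supp[OF h(2)]] ..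
qed

lemma tmap_smul:
  assumes "x \<in> X" "fib_linear B B' g x" "v \<in> fib (tensor_pre X L B) x"
  shows "tmap_id L B' g (pb_smul (tensor_pre X L B) c v) =
         pb_smul (tensor_pre X L B') c (tmap_id L B' g v)"
proof -
  obtain f where f: "v = tcls L B x f" "f \<in> fsf L B x" using fib_tensor_preE[OF assms(1,3)] .
  show ?thesis
    unfolding f(1) tensor_pre_smul[OF f(2)] tmap_tcls[OF assms(2) fsf_smul[OF f(2)]]
      tmap_tcls[OF assms(2) f(2)] tensor_pre_smul[OF push_fsf[OF assms(2) f(2)]]
      push_smul[OF fsf_fin_supp[OF f(2)]] ..
qed

lemma tmap_zero:
  assumes "fib_linear B B' g x"
  shows "tmap_id L B' g (pb_zero (tensor_pre X L B) x) = pb_zero (tensor_pre X L B') x"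
  using tmap_tcls[OF assms fsf_zero] by (simp add: push_zero)

lemma tens_eq: "a \<in> fib L x \<Longrightarrow> tens L B a b = tcls L B x (delta (a, b))"
  unfolding tens_def fib_def by simp

lemma tens_fib:
  assumes "x \<in> X" "a \<in> fib L x" "b \<in> fib B x"
  shows "tens L B a b \<in> fib (tensor_pre X L B) x"
  unfolding tens_eq[OF assms(2)] by (rule tcls_in_fib_tensor_pre[OF assms(1) fsf_delta[OF assms(2,3)]])

lemma tmap_tens:
  assumes "fib_linear B B' g x" "a \<in> fib L x" "b \<in> fib B x"
  shows "tmap_id L B' g (tens L B a b) = tens L B' a (g b)"
  unfolding tens_eq[OF assms(2)] tmap_tcls[OF assms(1) fsf_delta[OF assms(2,3)]] push_delta ..

lemma tens_add_right:
  assumes "a \<in> fib L x" "b \<in> fib B x" "b' \<in> fib B x"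
  shows "pb_add (tensor_pre X L B) (tens L B a b) (tens L B a b') = tens L B a (pb_add B b b')"
proof -
  have "pb_add (tensor_pre X L B) (tens L B a b) (tens L B a b') =
      tcls L B x (\<lambda>w. delta (a, b) w + delta (a, b') w)"
    unfolding tens_eq[OF assms(1)]
    by (rule tensor_pre_add[OF fsf_delta[OF assms(1,2)] fsf_delta[OF assms(1,3)]])
  also have "\<dots> = tcls L B x (delta (a, pb_add B b b'))"
  proof (rule tcls_eqI)
    show "(\<lambda>w. delta (a, b) w + delta (a, b') w - delta (a, pb_add B b b') w) \<in> rel_sub L B x"
      using rel_sub_uminus[OF subsetD[OF rel_sub_tgens tgens_add_right[OF assms]]]
      by (simp add: algebra_simps)
  qed
  finally show ?thesis unfolding tens_eq[OF assms(1)] .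
qed

lemma plot_of_cong: "(\<And>u. u \<in> U \<Longrightarrow> f u = g u) \<Longrightarrow> plot_of n U f = plot_of n U g"
  unfolding plot_of_def by (simp cong: restrict_cong)

lemma plot_of_comp_restrict [simp]: "plot_of n U (f \<circ> restrict p U) = plot_of n U (f \<circ> p)"
  by (rule plot_of_cong) simp

lemma diffeology_plotD:
  assumes "diffeology X D" "(n, U, p) \<in> D"
  shows "open_in_Rn n U" "p = restrict p U" "p ` U \<subseteq> X"
  using assms unfolding diffeology_def by fast+

lemma diffeology_plot_of:
  assumes "diffeology X D" "(n, U, p) \<in> D"
  shows "plot_of n U p = (n, U, p)"
  using diffeology_plotD(2)[OF assms] unfolding plot_of_def by simp

lemma diffeology_const:
  assumes "diffeology X D" "open_in_Rn n U" "x \<in> X"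
  shows "plot_of n U (\<lambda>_. x) \<in> D"
  using assms unfolding diffeology_def by blast

lemma diffeology_local:
  assumes "diffeology X D" "open_in_Rn n U" "p ` U \<subseteq> X"
    "\<And>u. u \<in> U \<Longrightarrow> \<exists>V. open_in_Rn n V \<and> u \<in> V \<and> V \<subseteq> U \<and> plot_of n V p \<in> D"
  shows "plot_of n U p \<in> D"
proof -
  have "\<forall>n U p. open_in_Rn n U \<and> p ` U \<subseteq> X \<and>
        (\<forall>u\<in>U. \<exists>V. open_in_Rn n V \<and> u \<in> V \<and> V \<subseteq> U \<and> plot_of n V p \<in> D)
        \<longrightarrow> plot_of n U p \<in> D"
    using assms(1) unfolding diffeology_def by (elim conjE)
  then show ?thesis using assms(2-4) by blast
qed

lemma diffeology_comp:
  assumes "diffeology X D" "(n, U, p) \<in> D" "open_in_Rn m W" "smooth_map m W n F" "F ` W \<subseteq> U"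
  shows "plot_of m W (p \<circ> F) \<in> D"
proof -
  have "\<forall>P\<in>D. case P of (n,U,p) \<Rightarrow> \<forall>m W F. open_in_Rn m W \<and> smooth_map m W n F \<and> F ` W \<subseteq> U
        \<longrightarrow> plot_of m W (p \<circ> F) \<in> D"
    using assms(1) unfolding diffeology_def by (elim conjE)
  from bspec[OF this assms(2)] show ?thesis using assms(3-5) by simp
qed

lemma diffeology_Inter:
  assumes "\<F> \<noteq> {}" "\<And>D. D \<in> \<F> \<Longrightarrow> diffeology X D"
  shows "diffeology X (\<Inter>\<F>)"
proof -
  obtain D0 where D0: "D0 \<in> \<F>" using assms(1) by blast
  show ?thesis unfolding diffeology_def
  proof (intro conjI allI impI ballI)
    fix P assume "P \<in> \<Inter>\<F>"
    then show "case P of (n, U, p) \<Rightarrow> open_in_Rn n U \<and> p = restrict p U \<and> p ` U \<subseteq> X"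
      using diffeology_plotD[OF assms(2)[OF D0]] D0 by (cases P) blast
  next
    fix n U x assume "open_in_Rn n U \<and> x \<in> X"
    then show "plot_of n U (\<lambda>_. x) \<in> \<Inter>\<F>" using diffeology_const[OF assms(2)] by blast
  next
    fix n U p assume h: "open_in_Rn n U \<and> p ` U \<subseteq> X \<and>
        (\<forall>u\<in>U. \<exists>V. open_in_Rn n V \<and> u \<in> V \<and> V \<subseteq> U \<and> plot_of n V p \<in> \<Inter>\<F>)"
    show "plot_of n U p \<in> \<Inter>\<F>"
    proof
      fix D assume D: "D \<in> \<F>"
      show "plot_of n U p \<in> D"
        by (rule diffeology_local[OF assms(2)[OF D]]) (use h D in blast)+
    qed
  next
    fix P assume P: "P \<in> \<Inter>\<F>"
    show "case P of (n, U, p) \<Rightarrow> \<forall>m W F. open_in_Rn m W \<and> smooth_map m W n F \<and> F ` W \<subseteq> U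
        \<longrightarrow> plot_of m W (p \<circ> F) \<in> \<Inter>\<F>"
      using diffeology_comp[OF assms(2)] P by (cases P) blast
  qed
qed

lemma smooth_betwD:
  assumes "smooth_betw X DX Y DY f" "(n, U, p) \<in> DX"
  shows "plot_of n U (f \<circ> p) \<in> DY"
  using assms unfolding smooth_betw_def by blast

lemma smooth_betw_mem: "smooth_betw X DX Y DY f \<Longrightarrow> x \<in> X \<Longrightarrow> f x \<in> Y"
  unfolding smooth_betw_def by blast

lemma prod_diffI:
  assumes "open_in_Rn n U" "plot_of n U q1 \<in> D1" "plot_of n U q2 \<in> D2"
  shows "plot_of n U (\<lambda>u. (q1 u, q2 u)) \<in> prod_diff D1 D2"
proof -
  let ?P = "restrict (\<lambda>u. (q1 u, q2 u)) U"
  have "plot_of n U (fst \<circ> ?P) = plot_of n U q1" "plot_of n U (snd \<circ> ?P) = plot_of n U q2"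
    by (auto intro: plot_of_cong)
  then show ?thesis using assms unfolding plot_of_def[of n U "\<lambda>u. (q1 u, q2 u)"] prod_diff_def by simp
qed

lemma prod_diffD:
  assumes "(n, U, p) \<in> prod_diff D1 D2"
  shows "open_in_Rn n U" "p = restrict p U" "plot_of n U (fst \<circ> p) \<in> D1" "plot_of n U (snd \<circ> p) \<in> D2"
  using assms unfolding prod_diff_def by simp_all

lemma fibprod_diffI:
  assumes "open_in_Rn n U" "plot_of n U q1 \<in> pb_diff B" "plot_of n U q2 \<in> pb_diff C"
    "\<And>u. u \<in> U \<Longrightarrow> (q1 u, q2 u) \<in> fibprod B C"
  shows "plot_of n U (\<lambda>u. (q1 u, q2 u)) \<in> fibprod_diff B C"
  using prod_diffI[OF assms(1-3)] assms(4)
  unfolding fibprod_diff_def subset_diff_def plot_of_def[of n U "\<lambda>u. (q1 u, q2 u)"] by auto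

lemma fibprod_diffD:
  assumes "(n, U, p) \<in> fibprod_diff B C"
  shows "open_in_Rn n U" "p = restrict p U" "plot_of n U (fst \<circ> p) \<in> pb_diff B"
    "plot_of n U (snd \<circ> p) \<in> pb_diff C" "p ` U \<subseteq> fibprod B C"
  using assms unfolding fibprod_diff_def subset_diff_def prod_diff_def by simp_all

lemma fibprod_diff_pointD:
  assumes "(n, U, p) \<in> fibprod_diff B C" "u \<in> U"
  shows "fst (p u) \<in> pb_tot B" "snd (p u) \<in> pb_tot C" "pb_proj B (fst (p u)) = pb_proj C (snd (p u))"
  using fibprod_diffD(5)[OF assms(1)] assms(2) unfolding fibprod_def by auto

lemma fibprod_diff_point_fib:
  assumes L: "smooth_betw (pb_tot L) (pb_diff L) X DX (pb_proj L)"
    and P: "(n, U, p) \<in> fibprod_diff L B" and u: "u \<in> U"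
  shows "pb_proj L (fst (p u)) \<in> X" "fst (p u) \<in> fib L (pb_proj L (fst (p u)))"
    "snd (p u) \<in> fib B (pb_proj L (fst (p u)))"
  using fibprod_diff_pointD[OF P u] smooth_betw_mem[OF L fibprod_diff_pointD(1)[OF P u]]
  unfolding fib_def by simp_all

lemma is_vpbD:
  assumes "is_vpb X DX T"
  shows "diffeology X DX" "diffeology (pb_tot T) (pb_diff T)"
    "smooth_betw (pb_tot T) (pb_diff T) X DX (pb_proj T)"
    "\<And>x. x \<in> X \<Longrightarrow> vector_space_on (fib T x) (pb_add T) (pb_smul T) (pb_zero T x)"
    "smooth_betw (fibprod T T) (fibprod_diff T T) (pb_tot T) (pb_diff T) (\<lambda>(v, w). pb_add T v w)"
    "smooth_betw (UNIV \<times> pb_tot T) (prod_diff real_diff (pb_diff T)) (pb_tot T) (pb_diff T) (\<lambda>(c, v). pb_smul T c v)"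
    "smooth_betw X DX (pb_tot T) (pb_diff T) (pb_zero T)"
  using assms unfolding is_vpb_def by blast+

lemma is_vpb_zero_fib: "is_vpb X DX B \<Longrightarrow> x \<in> X \<Longrightarrow> pb_zero B x \<in> fib B x"
  using vector_space_onD(1)[OF is_vpbD(4)] .

lemma is_vpb_proj_mem: "is_vpb X DX B \<Longrightarrow> v \<in> pb_tot B \<Longrightarrow> pb_proj B v \<in> X"
  by (rule smooth_betw_mem[OF is_vpbD(3)])

lemma plot_pb_add:
  assumes V: "is_vpb X DX B" and q1: "plot_of n U q1 \<in> pb_diff B" and q2: "plot_of n U q2 \<in> pb_diff B"
    and h: "\<And>u. u \<in> U \<Longrightarrow> q1 u \<in> pb_tot B \<and> q2 u \<in> pb_tot B \<and> pb_proj B (q1 u) = pb_proj B (q2 u)"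
  shows "plot_of n U (\<lambda>u. pb_add B (q1 u) (q2 u)) \<in> pb_diff B"
proof -
  have op: "open_in_Rn n U" using diffeology_plotD(1)[OF is_vpbD(2)[OF V] q1[unfolded plot_of_def]] .
  have "plot_of n U (\<lambda>u. (q1 u, q2 u)) \<in> fibprod_diff B B"
    by (rule fibprod_diffI[OF op q1 q2]) (use h in \<open>auto simp: fibprod_def\<close>)
  from smooth_betwD[OF is_vpbD(5)[OF V] this[unfolded plot_of_def]]
  show ?thesis unfolding plot_of_comp_restrict by (simp add: comp_def)
qed

lemma plot_pb_smul:
  assumes V: "is_vpb X DX B" and c: "plot_of n U c \<in> real_diff" and q: "plot_of n U q \<in> pb_diff B"
  shows "plot_of n U (\<lambda>u. pb_smul B (c u) (q u)) \<in> pb_diff B"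
proof -
  have op: "open_in_Rn n U" using diffeology_plotD(1)[OF is_vpbD(2)[OF V] q[unfolded plot_of_def]] .
  from smooth_betwD[OF is_vpbD(6)[OF V] prod_diffI[OF op c q, unfolded plot_of_def]]
  show ?thesis unfolding plot_of_comp_restrict by (simp add: comp_def)
qed

lemma plot_pb_proj:
  assumes V: "is_vpb X DX B" and q: "plot_of n U q \<in> pb_diff B"
  shows "plot_of n U (pb_proj B \<circ> q) \<in> DX"
  using smooth_betwD[OF is_vpbD(3)[OF V] q[unfolded plot_of_def]] by simp

lemma plot_pb_zero:
  assumes V: "is_vpb X DX B" and P: "(n, U, p) \<in> DX"
  shows "plot_of n U (pb_zero B \<circ> p) \<in> pb_diff B"
  using smooth_betwD[OF is_vpbD(7)[OF V] P] .

lemma smooth_betw_id: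
  assumes "diffeology A DA"
  shows "smooth_betw A DA A DA (\<lambda>v. v)"
  unfolding smooth_betw_def using diffeology_plot_of[OF assms] by (auto simp: comp_def)

lemma smooth_betw_comp:
  assumes f: "smooth_betw A DA Y DY f" and g: "smooth_betw Y DY Z DZ g"
  shows "smooth_betw A DA Z DZ (\<lambda>v. g (f v))"
  unfolding smooth_betw_def
proof (intro conjI ballI)
  fix v assume "v \<in> A"
  then show "g (f v) \<in> Z" using smooth_betw_mem[OF g smooth_betw_mem[OF f]] by blast
next
  fix P assume "P \<in> DA"
  then obtain n U p where P: "P = (n, U, p)" "(n, U, p) \<in> DA" by (cases P) auto
  from smooth_betwD[OF g smooth_betwD[OF f P(2), unfolded plot_of_def]]
  show "case P of (n, U, p) \<Rightarrow> plot_of n U ((\<lambda>v. g (f v)) \<circ> p) \<in> DZ"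
    unfolding P(1) plot_of_comp_restrict by (simp add: comp_def)
qed

lemma smooth_betw_pair_fibprod:
  assumes dA: "diffeology A DA" and f: "smooth_betw A DA (pb_tot B) (pb_diff B) f"
    and g: "smooth_betw A DA (pb_tot C) (pb_diff C) g"
    and proj: "\<And>v. v \<in> A \<Longrightarrow> pb_proj B (f v) = pb_proj C (g v)"
  shows "smooth_betw A DA (fibprod B C) (fibprod_diff B C) (\<lambda>v. (f v, g v))"
  unfolding smooth_betw_def
proof (intro conjI ballI)
  fix v assume "v \<in> A"
  then show "(f v, g v) \<in> fibprod B C"
    using smooth_betw_mem[OF f] smooth_betw_mem[OF g] proj by (simp add: fibprod_def)
next
  fix P assume "P \<in> DA"
  then obtain n U p where P: "P = (n, U, p)" "(n, U, p) \<in> DA" by (cases P) auto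
  have pA: "\<And>u. u \<in> U \<Longrightarrow> p u \<in> A" using diffeology_plotD(3)[OF dA P(2)] by blast
  have "plot_of n U (\<lambda>u. (f (p u), g (p u))) \<in> fibprod_diff B C"
    using fibprod_diffI[OF diffeology_plotD(1)[OF dA P(2)] smooth_betwD[OF f P(2)] smooth_betwD[OF g P(2)]]
      smooth_betw_mem[OF f] smooth_betw_mem[OF g] proj pA
    by (simp add: comp_def fibprod_def)
  then show "case P of (n, U, p) \<Rightarrow> plot_of n U ((\<lambda>v. (f v, g v)) \<circ> p) \<in> fibprod_diff B C"
    unfolding P(1) by (simp add: comp_def)
qed

lemma smooth_betw_zero_proj:
  assumes "is_vpb X DX B" "is_vpb X DX C"
  shows "smooth_betw (pb_tot B) (pb_diff B) (pb_tot C) (pb_diff C) (\<lambda>v. pb_zero C (pb_proj B v))"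
  by (rule smooth_betw_comp[OF is_vpbD(3)[OF assms(1)] is_vpbD(7)[OF assms(2)]])

lemma fibprod_diff_map_snd:
  assumes g: "smooth_betw (pb_tot B) (pb_diff B) (pb_tot B') (pb_diff B') g"
    and proj: "\<And>v. v \<in> pb_tot B \<Longrightarrow> pb_proj B' (g v) = pb_proj B v"
    and P: "(n, U, p) \<in> fibprod_diff L B"
  shows "plot_of n U (\<lambda>u. (fst (p u), g (snd (p u)))) \<in> fibprod_diff L B'"
proof (rule fibprod_diffI[OF fibprod_diffD(1)[OF P]])
  show "plot_of n U (\<lambda>u. fst (p u)) \<in> pb_diff L" using fibprod_diffD(3)[OF P] by (simp add: comp_def)
  show "plot_of n U (\<lambda>u. g (snd (p u))) \<in> pb_diff B'"
    using smooth_betwD[OF g fibprod_diffD(4)[OF P, unfolded plot_of_def]]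
    unfolding plot_of_comp_restrict by (simp add: comp_def)
  fix u assume "u \<in> U"
  then show "(fst (p u), g (snd (p u))) \<in> fibprod L B'"
    using fibprod_diff_pointD[OF P] smooth_betw_mem[OF g] proj by (simp add: fibprod_def)
qed

definition pullback_diff :: "'b set \<Rightarrow> ('b \<Rightarrow> 'c) \<Rightarrow> 'c plot set \<Rightarrow> 'b plot set" where
  "pullback_diff A f DY = {(n, U, p). open_in_Rn n U \<and> p = restrict p U \<and> p ` U \<subseteq> A \<and>
      plot_of n U (f \<circ> p) \<in> DY}"

lemma plot_of_in_pullback_diff:
  "plot_of n U p \<in> pullback_diff A f DY \<longleftrightarrow>
     open_in_Rn n U \<and> p ` U \<subseteq> A \<and> plot_of n U (f \<circ> p) \<in> DY"
proof -
  have "restrict (f \<circ> restrict p U) U = restrict (f \<circ> p) U" by (auto simp: restrict_def)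
  then show ?thesis unfolding pullback_diff_def plot_of_def by auto
qed

lemma pullback_diffD:
  assumes "(n, U, p) \<in> pullback_diff A f DY"
  shows "open_in_Rn n U" "p ` U \<subseteq> A" "plot_of n U (f \<circ> p) \<in> DY"
  using assms unfolding pullback_diff_def by auto

lemma diffeology_pullback_diff:
  assumes dY: "diffeology Y DY" and fA: "\<And>a. a \<in> A \<Longrightarrow> f a \<in> Y"
  shows "diffeology A (pullback_diff A f DY)"
  unfolding diffeology_def
proof (intro conjI allI impI ballI)
  fix P assume "P \<in> pullback_diff A f DY"
  then show "case P of (n, U, p) \<Rightarrow> open_in_Rn n U \<and> p = restrict p U \<and> p ` U \<subseteq> A"
    unfolding pullback_diff_def by auto
next
  fix n U a assume h: "open_in_Rn n U \<and> a \<in> A"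
  then have "plot_of n U (\<lambda>_. f a) \<in> DY" using diffeology_const[OF dY] fA by blast
  then show "plot_of n U (\<lambda>_. a) \<in> pullback_diff A f DY"
    unfolding plot_of_in_pullback_diff using h by (auto simp: comp_def)
next
  fix n U p assume h: "open_in_Rn n U \<and> p ` U \<subseteq> A \<and>
        (\<forall>u\<in>U. \<exists>V. open_in_Rn n V \<and> u \<in> V \<and> V \<subseteq> U \<and> plot_of n V p \<in> pullback_diff A f DY)"
  have "plot_of n U (f \<circ> p) \<in> DY"
  proof (rule diffeology_local[OF dY])
    show "open_in_Rn n U" "(f \<circ> p) ` U \<subseteq> Y" using h fA by auto
    fix u assume "u \<in> U"
    then show "\<exists>V. open_in_Rn n V \<and> u \<in> V \<and> V \<subseteq> U \<and> plot_of n V (f \<circ> p) \<in> DY"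
      using h unfolding plot_of_in_pullback_diff by blast
  qed
  then show "plot_of n U p \<in> pullback_diff A f DY" unfolding plot_of_in_pullback_diff using h by blast
next
  fix P assume P: "P \<in> pullback_diff A f DY"
  obtain n U p where P_eq: "P = (n, U, p)" by (cases P)
  have pA: "p ` U \<subseteq> A" and fp: "(n, U, restrict (f \<circ> p) U) \<in> DY"
    using P unfolding P_eq pullback_diff_def plot_of_def by auto
  show "case P of (n, U, p) \<Rightarrow> \<forall>m W F. open_in_Rn m W \<and> smooth_map m W n F \<and> F ` W \<subseteq> U
        \<longrightarrow> plot_of m W (p \<circ> F) \<in> pullback_diff A f DY"
    unfolding P_eq prod.case
  proof (intro allI impI)
    fix m W F assume h: "open_in_Rn m W \<and> smooth_map m W n F \<and> F ` W \<subseteq> U"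
    have "plot_of m W (restrict (f \<circ> p) U \<circ> F) \<in> DY"
      using diffeology_comp[OF dY fp] h by blast
    moreover have "plot_of m W (restrict (f \<circ> p) U \<circ> F) = plot_of m W (f \<circ> (p \<circ> F))"
      by (rule plot_of_cong) (use h in auto)
    ultimately show "plot_of m W (p \<circ> F) \<in> pullback_diff A f DY"
      unfolding plot_of_in_pullback_diff using h pA by auto
  qed
qed

section \<open>The tensor product diffeology\<close>

lemma tensor_pre_tot_iff:
  "v \<in> pb_tot (tensor_pre X L B) \<longleftrightarrow> fst v \<in> X \<and> v \<in> fib (tensor_pre X L B) (fst v)"
  unfolding fib_def tensor_pre_def by auto

lemma tensor_pre_tot_fst: "v \<in> pb_tot (tensor_pre X L B) \<Longrightarrow> fst v \<in> X"
  using tensor_pre_tot_iff by blast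

lemma fst_tensor_pre_add: "fst (pb_add (tensor_pre X L B) v w) = fst v"
  by (cases v; cases w) (simp add: tensor_pre_def)

lemma fst_tensor_pre_smul: "fst (pb_smul (tensor_pre X L B) c v) = fst v"
  by (cases v) (simp add: tensor_pre_def)

lemma tensor_pre_zero_tot: "x \<in> X \<Longrightarrow> pb_zero (tensor_pre X L B) x \<in> pb_tot (tensor_pre X L B)"
  unfolding tensor_pre_def by simp (blast intro: fsf_zero)

lemma fst_image_tensor_pre_tot: "fst ` pb_tot (tensor_pre X L B) = X"
proof
  show "X \<subseteq> fst ` pb_tot (tensor_pre X L B)"
    using tensor_pre_zero_tot[of _ X L B] by (force simp: image_iff)
qed (use tensor_pre_tot_fst in blast)

lemma tensor_pre_add_tot:
  assumes "v \<in> pb_tot (tensor_pre X L B)" "w \<in> pb_tot (tensor_pre X L B)" "fst v = fst w"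
  shows "pb_add (tensor_pre X L B) v w \<in> pb_tot (tensor_pre X L B)"
  using vector_space_onD(2)[OF vector_space_on_tensor_pre[of "fst v" X L B]] assms
  unfolding tensor_pre_tot_iff[of v] tensor_pre_tot_iff[of w] tensor_pre_tot_iff[of "pb_add _ v w"]
  by (simp add: fst_tensor_pre_add)

lemma tensor_pre_smul_tot:
  assumes "v \<in> pb_tot (tensor_pre X L B)"
  shows "pb_smul (tensor_pre X L B) c v \<in> pb_tot (tensor_pre X L B)"
  using vector_space_onD(3)[OF vector_space_on_tensor_pre[of "fst v" X L B]] assms
  unfolding tensor_pre_tot_iff[of v] tensor_pre_tot_iff[of "pb_smul _ c v"]
  by (simp add: fst_tensor_pre_smul)

lemma is_vpb_tensor_preI:
  fixes X :: "'a set" and L :: "('a, 'l) vpb" and B :: "('a, 'v) vpb" and D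
  defines "T \<equiv> (tensor_pre X L B) \<lparr> pb_diff := D \<rparr>"
  assumes dX: "diffeology X DX" and dT: "diffeology (pb_tot (tensor_pre X L B)) D"
    and proj: "\<And>n U p. (n, U, p) \<in> D \<Longrightarrow> plot_of n U (fst \<circ> p) \<in> DX"
    and add: "\<And>n U p. (n, U, p) \<in> fibprod_diff T T \<Longrightarrow> plot_of n U ((\<lambda>(v, w). pb_add T v w) \<circ> p) \<in> D"
    and smul: "\<And>n U p. (n, U, p) \<in> prod_diff real_diff D \<Longrightarrow>
      plot_of n U ((\<lambda>(c, v). pb_smul T c v) \<circ> p) \<in> D"
    and zero: "\<And>n U p. (n, U, p) \<in> DX \<Longrightarrow> plot_of n U (pb_zero T \<circ> p) \<in> D"
  shows "is_vpb X DX T"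
  unfolding is_vpb_def
proof (intro conjI ballI)
  show "smooth_betw (pb_tot T) (pb_diff T) X DX (pb_proj T)"
    using proj tensor_pre_tot_fst unfolding smooth_betw_def T_def by auto
  show "smooth_betw (fibprod T T) (fibprod_diff T T) (pb_tot T) (pb_diff T) (\<lambda>(v, w). pb_add T v w)"
    using add tensor_pre_add_tot[where X=X and L=L and B=B] unfolding smooth_betw_def T_def fibprod_def by auto
  show "smooth_betw (UNIV \<times> pb_tot T) (prod_diff real_diff (pb_diff T)) (pb_tot T) (pb_diff T)
      (\<lambda>(c, v). pb_smul T c v)"
    using smul tensor_pre_smul_tot[where X=X and L=L and B=B] unfolding smooth_betw_def T_def by auto
  show "smooth_betw X DX (pb_tot T) (pb_diff T) (pb_zero T)"
    using zero tensor_pre_zero_tot unfolding smooth_betw_def T_def by auto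
  fix x assume "x \<in> X"
  from vector_space_on_tensor_pre[OF this, of L B]
  show "vector_space_on (fib T x) (pb_add T) (pb_smul T) (pb_zero T x)"
    unfolding T_def fib_def by simp
qed (use dX dT fst_image_tensor_pre_tot in \<open>simp_all add: T_def\<close>)

definition tens_plots_in :: "('a, 'l) vpb \<Rightarrow> ('a, 'v) vpb \<Rightarrow> ('a, 'l, 'v) tens plot set \<Rightarrow> bool" where
  "tens_plots_in L B D \<longleftrightarrow>
     (\<forall>(n,U,p)\<in>fibprod_diff L B. plot_of n U (\<lambda>u. tens L B (fst (p u)) (snd (p u))) \<in> D)"

definition tensor_diff_candidates :: "'a set \<Rightarrow> 'a plot set \<Rightarrow> ('a, 'l) vpb \<Rightarrow> ('a, 'v) vpb \<Rightarrow>
    ('a, 'l, 'v) tens plot set set" where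
  "tensor_diff_candidates X DX L B =
     {D. is_vpb X DX ((tensor_pre X L B) \<lparr> pb_diff := D \<rparr>) \<and> tens_plots_in L B D}"

lemma tens_plots_inD:
  assumes "tens_plots_in L B D" "plot_of n U q \<in> fibprod_diff L B"
  shows "plot_of n U (\<lambda>u. tens L B (fst (q u)) (snd (q u))) \<in> D"
proof -
  have "plot_of n U (\<lambda>u. tens L B (fst (restrict q U u)) (snd (restrict q U u))) \<in> D"
    using assms unfolding tens_plots_in_def plot_of_def[of n U q] by blast
  moreover have "plot_of n U (\<lambda>u. tens L B (fst (restrict q U u)) (snd (restrict q U u))) =
      plot_of n U (\<lambda>u. tens L B (fst (q u)) (snd (q u)))"
    by (rule plot_of_cong) simp
  ultimately show ?thesis by simp
qed

lemma tensor_bundle_eq: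
  "tensor_bundle X DX L B = (tensor_pre X L B) \<lparr> pb_diff := \<Inter>(tensor_diff_candidates X DX L B) \<rparr>"
  unfolding tensor_bundle_def tensor_diff_candidates_def tens_plots_in_def ..

lemma is_vpb_tensor_pre_pullback_fst:
  assumes dX: "diffeology X DX"
  shows "is_vpb X DX ((tensor_pre X L B) \<lparr> pb_diff := pullback_diff (pb_tot (tensor_pre X L B)) fst DX \<rparr>)"
    (is "is_vpb X DX (?T\<lparr>pb_diff := ?D\<rparr>)")
proof (rule is_vpb_tensor_preI[OF dX diffeology_pullback_diff[OF dX tensor_pre_tot_fst]])
  fix n U p assume "(n, U, p) \<in> ?D"
  then show "plot_of n U (fst \<circ> p) \<in> DX" by (rule pullback_diffD)
next
  fix n U p assume P: "(n, U, p) \<in> fibprod_diff (?T\<lparr>pb_diff := ?D\<rparr>) (?T\<lparr>pb_diff := ?D\<rparr>)"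
  have "plot_of n U (fst \<circ> (fst \<circ> p)) \<in> DX"
    using fibprod_diffD(3)[OF P] by (simp add: plot_of_in_pullback_diff)
  moreover have "plot_of n U (fst \<circ> (fst \<circ> p)) = plot_of n U (fst \<circ> ((\<lambda>(v, w). pb_add ?T v w) \<circ> p))"
    by (rule plot_of_cong) (simp add: split_beta fst_tensor_pre_add)
  moreover have "((\<lambda>(v, w). pb_add ?T v w) \<circ> p) ` U \<subseteq> pb_tot ?T"
  proof (rule image_subsetI)
    fix u assume "u \<in> U"
    from tensor_pre_add_tot[OF fibprod_diff_pointD[OF P this, simplified]]
    show "((\<lambda>(v, w). pb_add ?T v w) \<circ> p) u \<in> pb_tot ?T" by (simp add: split_beta)
  qed
  ultimately show "plot_of n U ((\<lambda>(v, w). pb_add (?T\<lparr>pb_diff := ?D\<rparr>) v w) \<circ> p) \<in> ?D"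
    unfolding plot_of_in_pullback_diff using fibprod_diffD(1)[OF P] by simp
next
  fix n U p assume P: "(n, U, p) \<in> prod_diff real_diff ?D"
  have "plot_of n U (fst \<circ> (snd \<circ> p)) \<in> DX"
    using prod_diffD(4)[OF P] by (simp add: plot_of_in_pullback_diff)
  moreover have "plot_of n U (fst \<circ> (snd \<circ> p)) = plot_of n U (fst \<circ> ((\<lambda>(c, v). pb_smul ?T c v) \<circ> p))"
    by (rule plot_of_cong) (simp add: split_beta fst_tensor_pre_smul)
  moreover have "((\<lambda>(c, v). pb_smul ?T c v) \<circ> p) ` U \<subseteq> pb_tot ?T"
  proof (rule image_subsetI)
    fix u assume "u \<in> U"
    then have "snd (p u) \<in> pb_tot ?T"
      using prod_diffD(4)[OF P] by (auto simp: plot_of_in_pullback_diff)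
    from tensor_pre_smul_tot[OF this]
    show "((\<lambda>(c, v). pb_smul ?T c v) \<circ> p) u \<in> pb_tot ?T" by (simp add: split_beta)
  qed
  ultimately show "plot_of n U ((\<lambda>(c, v). pb_smul (?T\<lparr>pb_diff := ?D\<rparr>) c v) \<circ> p) \<in> ?D"
    unfolding plot_of_in_pullback_diff using prod_diffD(1)[OF P] by simp
next
  fix n U p assume P: "(n, U, p) \<in> DX"
  have "plot_of n U (fst \<circ> (pb_zero ?T \<circ> p)) = plot_of n U p"
    by (rule plot_of_cong) simp
  moreover have "(pb_zero ?T \<circ> p) ` U \<subseteq> pb_tot ?T"
    using diffeology_plotD(3)[OF dX P] tensor_pre_zero_tot[where X=X and L=L and B=B]
    by (auto simp del: tensor_pre_simps)
  ultimately show "plot_of n U (pb_zero (?T\<lparr>pb_diff := ?D\<rparr>) \<circ> p) \<in> ?D"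
    unfolding plot_of_in_pullback_diff using diffeology_plotD(1)[OF dX P] diffeology_plot_of[OF dX P] P
    by simp
qed

lemma tens_plots_in_pullback_fst:
  assumes L: "smooth_betw (pb_tot L) (pb_diff L) X DX (pb_proj L)"
  shows "tens_plots_in L B (pullback_diff (pb_tot (tensor_pre X L B)) fst DX)"
  unfolding tens_plots_in_def
proof (intro ballI, clarify)
  fix n U p assume P: "(n, U, p) \<in> fibprod_diff L B"
  have "tens L B (fst (p u)) (snd (p u)) \<in> pb_tot (tensor_pre X L B)" if u: "u \<in> U" for u
    using tens_fib[OF fibprod_diff_point_fib[OF L P u]] unfolding fib_def by simp
  moreover have "plot_of n U (pb_proj L \<circ> (fst \<circ> p)) \<in> DX"
    using smooth_betwD[OF L fibprod_diffD(3)[OF P, unfolded plot_of_def]] by simp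
  moreover have "plot_of n U (pb_proj L \<circ> (fst \<circ> p)) =
      plot_of n U (fst \<circ> (\<lambda>u. tens L B (fst (p u)) (snd (p u))))"
    by (rule plot_of_cong) (simp add: tens_def)
  ultimately show "plot_of n U (\<lambda>u. tens L B (fst (p u)) (snd (p u))) \<in>
      pullback_diff (pb_tot (tensor_pre X L B)) fst DX"
    unfolding plot_of_in_pullback_diff using fibprod_diffD(1)[OF P] by auto
qed

lemma pullback_fst_in_tensor_diff_candidates:
  assumes "diffeology X DX" "smooth_betw (pb_tot L) (pb_diff L) X DX (pb_proj L)"
  shows "pullback_diff (pb_tot (tensor_pre X L B)) fst DX \<in> tensor_diff_candidates X DX L B"
  unfolding tensor_diff_candidates_def
  using is_vpb_tensor_pre_pullback_fst[OF assms(1)] tens_plots_in_pullback_fst[OF assms(2)] by blast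

lemma is_vpb_tensor_bundle:
  assumes dX: "diffeology X DX" and L: "smooth_betw (pb_tot L) (pb_diff L) X DX (pb_proj L)"
  shows "is_vpb X DX (tensor_bundle X DX L B)"
proof -
  let ?F = "tensor_diff_candidates X DX L B"
  let ?T = "\<lambda>D. (tensor_pre X L B) \<lparr> pb_diff := D \<rparr>"
  have F0: "pullback_diff (pb_tot (tensor_pre X L B)) fst DX \<in> ?F"
    by (rule pullback_fst_in_tensor_diff_candidates[OF dX L])
  have F: "is_vpb X DX (?T D)" if "D \<in> ?F" for D
    using that unfolding tensor_diff_candidates_def by blast
  have "is_vpb X DX (?T (\<Inter>?F))"
  proof (rule is_vpb_tensor_preI[OF dX])
    show "diffeology (pb_tot (tensor_pre X L B)) (\<Inter>?F)"
      by (rule diffeology_Inter) (use F0 is_vpbD(2)[OF F] in auto)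
  next
    fix n U p assume "(n, U, p) \<in> \<Inter>?F"
    then show "plot_of n U (fst \<circ> p) \<in> DX" using F0 pullback_diffD(3) by blast
  next
    fix n U p assume P: "(n, U, p) \<in> fibprod_diff (?T (\<Inter>?F)) (?T (\<Inter>?F))"
    show "plot_of n U ((\<lambda>(v, w). pb_add (?T (\<Inter>?F)) v w) \<circ> p) \<in> \<Inter>?F"
    proof
      fix D assume D: "D \<in> ?F"
      have "(n, U, p) \<in> fibprod_diff (?T D) (?T D)"
        using D P unfolding fibprod_diff_def subset_diff_def prod_diff_def fibprod_def by auto
      from smooth_betwD[OF is_vpbD(5)[OF F[OF D]] this]
      show "plot_of n U ((\<lambda>(v, w). pb_add (?T (\<Inter>?F)) v w) \<circ> p) \<in> D" by simp
    qed
  next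
    fix n U p assume P: "(n, U, p) \<in> prod_diff real_diff (\<Inter>?F)"
    show "plot_of n U ((\<lambda>(c, v). pb_smul (?T (\<Inter>?F)) c v) \<circ> p) \<in> \<Inter>?F"
    proof
      fix D assume D: "D \<in> ?F"
      have "(n, U, p) \<in> prod_diff real_diff D"
        using D P unfolding prod_diff_def by auto
      from smooth_betwD[OF is_vpbD(6)[OF F[OF D], simplified] this]
      show "plot_of n U ((\<lambda>(c, v). pb_smul (?T (\<Inter>?F)) c v) \<circ> p) \<in> D" by simp
    qed
  next
    fix n U p assume P: "(n, U, p) \<in> DX"
    show "plot_of n U (pb_zero (?T (\<Inter>?F)) \<circ> p) \<in> \<Inter>?F"
      using smooth_betwD[OF is_vpbD(7)[OF F] P] by auto
  qed
  then show ?thesis unfolding tensor_bundle_eq .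
qed

lemma tens_plots_in_tensor_bundle: "tens_plots_in L B (pb_diff (tensor_bundle X DX L B))"
  unfolding tens_plots_in_def tensor_bundle_eq tensor_diff_candidates_def by auto

lemma tensor_bundle_diff_least:
  "D \<in> tensor_diff_candidates X DX L B \<Longrightarrow> pb_diff (tensor_bundle X DX L B) \<subseteq> D"
  unfolding tensor_bundle_eq by auto

locale tensor_id_map =
  fixes X :: "'a set" and DX :: "'a plot set" and L :: "('a, 'l) vpb"
    and B :: "('a, 'v) vpb" and B' :: "('a, 'w) vpb" and g :: "'v \<Rightarrow> 'w"
  assumes dX: "diffeology X DX"
    and L_proj: "smooth_betw (pb_tot L) (pb_diff L) X DX (pb_proj L)"
    and lin: "\<And>x. x \<in> X \<Longrightarrow> fib_linear B B' g x"
    and smooth: "smooth_betw (pb_tot B) (pb_diff B) (pb_tot B') (pb_diff B') g"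
    and proj: "\<And>v. v \<in> pb_tot B \<Longrightarrow> pb_proj B' (g v) = pb_proj B v"
begin

abbreviation "T \<equiv> tensor_pre X L B"
abbreviation "T' \<equiv> tensor_pre X L B'"
abbreviation "TB' \<equiv> tensor_bundle X DX L B'"
abbreviation "tm \<equiv> tmap_id L B' g"

text \<open>The tensor product diffeology is the finest one making the generating plots smooth, so it
  suffices that the pullback of the target diffeology along \<open>tm\<close> is again a candidate.\<close>

abbreviation "tm_pullback \<equiv> pullback_diff (pb_tot T) tm (pb_diff TB')"

lemma vpb_TB': "is_vpb X DX TB'"
  by (rule is_vpb_tensor_bundle[OF dX L_proj])

lemma tm_tot:
  assumes "v \<in> pb_tot T"
  shows "tm v \<in> pb_tot T'" "fst (tm v) = fst v"
proof -
  have x: "fst v \<in> X" and v: "v \<in> fib T (fst v)" using assms tensor_pre_tot_iff by blast+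
  have "tm v \<in> fib T' (fst v)" by (rule tmap_fib[OF x lin[OF x] v])
  then show "tm v \<in> pb_tot T'" "fst (tm v) = fst v" unfolding fib_def by simp_all
qed

lemma diffeology_tm_pullback: "diffeology (pb_tot T) tm_pullback"
  using diffeology_pullback_diff[OF is_vpbD(2)[OF vpb_TB', simplified] tm_tot(1)] .

lemma tm_pullback_add:
  assumes P: "(n, U, p) \<in> fibprod_diff (T\<lparr>pb_diff := tm_pullback\<rparr>) (T\<lparr>pb_diff := tm_pullback\<rparr>)"
  shows "plot_of n U ((\<lambda>(v, w). pb_add T v w) \<circ> p) \<in> tm_pullback"
proof -
  note pu = fibprod_diff_pointD[OF P, simplified]
  have "plot_of n U (tm \<circ> (fst \<circ> p)) \<in> pb_diff TB'" "plot_of n U (tm \<circ> (snd \<circ> p)) \<in> pb_diff TB'"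
    using fibprod_diffD(3,4)[OF P] by (simp_all add: plot_of_in_pullback_diff)
  from plot_pb_add[OF vpb_TB' this]
  have "plot_of n U (\<lambda>u. pb_add T' (tm (fst (p u))) (tm (snd (p u)))) \<in> pb_diff TB'"
    using pu tm_tot by simp
  moreover have "plot_of n U (\<lambda>u. pb_add T' (tm (fst (p u))) (tm (snd (p u)))) =
     plot_of n U (tm \<circ> ((\<lambda>(v, w). pb_add T v w) \<circ> p))"
  proof (rule plot_of_cong)
    fix u assume u: "u \<in> U"
    have x: "fst (fst (p u)) \<in> X" using pu(1)[OF u] tensor_pre_tot_fst by blast
    have "fst (p u) \<in> fib T (fst (fst (p u)))" "snd (p u) \<in> fib T (fst (fst (p u)))"
      using pu[OF u] unfolding fib_def by auto
    from tmap_add[OF x lin[OF x] this]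
    show "pb_add T' (tm (fst (p u))) (tm (snd (p u))) = (tm \<circ> ((\<lambda>(v, w). pb_add T v w) \<circ> p)) u"
      by (simp add: split_beta)
  qed
  moreover have "((\<lambda>(v, w). pb_add T v w) \<circ> p) ` U \<subseteq> pb_tot T"
    using tensor_pre_add_tot[OF pu] by (auto simp: split_beta)
  ultimately show ?thesis
    unfolding plot_of_in_pullback_diff using fibprod_diffD(1)[OF P] by simp
qed

lemma tm_pullback_smul:
  assumes P: "(n, U, p) \<in> prod_diff real_diff tm_pullback"
  shows "plot_of n U ((\<lambda>(c, v). pb_smul T c v) \<circ> p) \<in> tm_pullback"
proof -
  have s: "\<And>u. u \<in> U \<Longrightarrow> snd (p u) \<in> pb_tot T"
    using prod_diffD(4)[OF P] unfolding plot_of_in_pullback_diff by auto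
  have "plot_of n U (tm \<circ> (snd \<circ> p)) \<in> pb_diff TB'"
    using prod_diffD(4)[OF P] by (simp add: plot_of_in_pullback_diff)
  from plot_pb_smul[OF vpb_TB' prod_diffD(3)[OF P] this]
  have "plot_of n U (\<lambda>u. pb_smul T' (fst (p u)) (tm (snd (p u)))) \<in> pb_diff TB'" by simp
  moreover have "plot_of n U (\<lambda>u. pb_smul T' (fst (p u)) (tm (snd (p u)))) =
     plot_of n U (tm \<circ> ((\<lambda>(c, v). pb_smul T c v) \<circ> p))"
  proof (rule plot_of_cong)
    fix u assume u: "u \<in> U"
    have x: "fst (snd (p u)) \<in> X" using s[OF u] tensor_pre_tot_fst by blast
    have "snd (p u) \<in> fib T (fst (snd (p u)))" using s[OF u] unfolding fib_def by auto
    from tmap_smul[OF x lin[OF x] this]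
    show "pb_smul T' (fst (p u)) (tm (snd (p u))) = (tm \<circ> ((\<lambda>(c, v). pb_smul T c v) \<circ> p)) u"
      by (simp add: split_beta)
  qed
  moreover have "((\<lambda>(c, v). pb_smul T c v) \<circ> p) ` U \<subseteq> pb_tot T"
    using tensor_pre_smul_tot[OF s] by (auto simp: split_beta)
  ultimately show ?thesis
    unfolding plot_of_in_pullback_diff using prod_diffD(1)[OF P] by simp
qed

lemma tm_pullback_zero:
  assumes P: "(n, U, p) \<in> DX"
  shows "plot_of n U (pb_zero T \<circ> p) \<in> tm_pullback"
proof -
  have pX: "\<And>u. u \<in> U \<Longrightarrow> p u \<in> X" using diffeology_plotD(3)[OF dX P] by blast
  have "plot_of n U (pb_zero T' \<circ> p) = plot_of n U (tm \<circ> (pb_zero T \<circ> p))"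
  proof (rule plot_of_cong)
    fix u assume "u \<in> U"
    from tmap_zero[where L=L and X=X, OF lin[OF pX[OF this]]]
    show "(pb_zero T' \<circ> p) u = (tm \<circ> (pb_zero T \<circ> p)) u" by simp
  qed
  moreover have "(pb_zero T \<circ> p) ` U \<subseteq> pb_tot T"
    using tensor_pre_zero_tot[where X=X and L=L and B=B] pX by (auto simp del: tensor_pre_simps)
  ultimately show ?thesis
    using plot_pb_zero[OF vpb_TB' P] diffeology_plotD(1)[OF dX P]
    unfolding plot_of_in_pullback_diff by simp
qed

lemma is_vpb_tm_pullback: "is_vpb X DX (T\<lparr>pb_diff := tm_pullback\<rparr>)"
proof (rule is_vpb_tensor_preI[OF dX diffeology_tm_pullback])
  fix n U p assume "(n, U, p) \<in> tm_pullback"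
  then have "plot_of n U (pb_proj TB' \<circ> (tm \<circ> p)) \<in> DX" "p ` U \<subseteq> pb_tot T"
    using plot_pb_proj[OF vpb_TB'] by (auto dest: pullback_diffD)
  moreover have "plot_of n U (pb_proj TB' \<circ> (tm \<circ> p)) = plot_of n U (fst \<circ> p)"
  proof (rule plot_of_cong)
    fix u assume "u \<in> U"
    then have "p u \<in> pb_tot T" using calculation(2) by blast
    then show "(pb_proj TB' \<circ> (tm \<circ> p)) u = (fst \<circ> p) u" by (simp add: tm_tot(2))
  qed
  ultimately show "plot_of n U (fst \<circ> p) \<in> DX" by simp
next
  fix n U p assume "(n, U, p) \<in> fibprod_diff (T\<lparr>pb_diff := tm_pullback\<rparr>) (T\<lparr>pb_diff := tm_pullback\<rparr>)"
  from tm_pullback_add[OF this] show "plot_of n U ((\<lambda>(v, w). pb_add (T\<lparr>pb_diff := tm_pullback\<rparr>) v w) \<circ> p) \<in> tm_pullback"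
    by simp
next
  fix n U p assume "(n, U, p) \<in> prod_diff real_diff tm_pullback"
  from tm_pullback_smul[OF this] show "plot_of n U ((\<lambda>(c, v). pb_smul (T\<lparr>pb_diff := tm_pullback\<rparr>) c v) \<circ> p) \<in> tm_pullback"
    by simp
next
  fix n U p assume "(n, U, p) \<in> DX"
  from tm_pullback_zero[OF this] show "plot_of n U (pb_zero (T\<lparr>pb_diff := tm_pullback\<rparr>) \<circ> p) \<in> tm_pullback"
    by simp
qed

lemma tens_plots_in_tm_pullback: "tens_plots_in L B tm_pullback"
  unfolding tens_plots_in_def
proof (intro ballI, clarify)
  fix n U p assume P: "(n, U, p) \<in> fibprod_diff L B"
  note ab = fibprod_diff_point_fib[OF L_proj P]
  have "plot_of n U (\<lambda>u. tens L B' (fst (p u)) (g (snd (p u)))) \<in> pb_diff TB'"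
    using tens_plots_inD[OF tens_plots_in_tensor_bundle fibprod_diff_map_snd[OF smooth proj P]] by simp
  moreover have "plot_of n U (\<lambda>u. tens L B' (fst (p u)) (g (snd (p u)))) =
      plot_of n U (tm \<circ> (\<lambda>u. tens L B (fst (p u)) (snd (p u))))"
  proof (rule plot_of_cong)
    fix u assume "u \<in> U"
    from tmap_tens[OF lin[OF ab(1)[OF this]] ab(2,3)[OF this]]
    show "tens L B' (fst (p u)) (g (snd (p u))) = (tm \<circ> (\<lambda>u. tens L B (fst (p u)) (snd (p u)))) u"
      by simp
  qed
  moreover have "tens L B (fst (p u)) (snd (p u)) \<in> pb_tot T" if "u \<in> U" for u
    using tens_fib[OF ab[OF that]] unfolding fib_def by simp
  ultimately show "plot_of n U (\<lambda>u. tens L B (fst (p u)) (snd (p u))) \<in> tm_pullback"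
    unfolding plot_of_in_pullback_diff using fibprod_diffD(1)[OF P] by (simp add: image_subset_iff)
qed

lemma tm_pullback_candidate: "tm_pullback \<in> tensor_diff_candidates X DX L B"
  unfolding tensor_diff_candidates_def using is_vpb_tm_pullback tens_plots_in_tm_pullback by blast

lemma tmap_plot:
  assumes "(n, U, p) \<in> pb_diff (tensor_bundle X DX L B)"
  shows "plot_of n U (tm \<circ> p) \<in> pb_diff TB'"
proof -
  have "(n, U, p) \<in> tm_pullback" using tensor_bundle_diff_least[OF tm_pullback_candidate] assms by blast
  then show ?thesis by (rule pullback_diffD(3))
qed

end


lemma dsum_simps [simp]:
  "pb_tot (dsum B C) = fibprod B C"
  "pb_diff (dsum B C) = fibprod_diff B C"
  "pb_proj (dsum B C) (v, w) = pb_proj B v"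
  "pb_add (dsum B C) (v, w) (v', w') = (pb_add B v v', pb_add C w w')"
  "pb_smul (dsum B C) c (v, w) = (pb_smul B c v, pb_smul C c w)"
  "pb_zero (dsum B C) x = (pb_zero B x, pb_zero C x)"
  unfolding dsum_def by simp_all

lemma fib_dsum: "(v, w) \<in> fib (dsum B C) x \<longleftrightarrow> v \<in> fib B x \<and> w \<in> fib C x"
  unfolding fib_def by (auto simp: fibprod_def)

lemma pb_add_dsum: "pb_add (dsum B C) p q = (pb_add B (fst p) (fst q), pb_add C (snd p) (snd q))"
  by (cases p; cases q) simp

lemma pb_smul_dsum: "pb_smul (dsum B C) c p = (pb_smul B c (fst p), pb_smul C c (snd p))"
  by (cases p) simp

lemma is_vpb_zero_proj:
  assumes "is_vpb X DX B" "x \<in> X"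
  shows "pb_zero B x \<in> pb_tot B" "pb_proj B (pb_zero B x) = x"
  using is_vpb_zero_fib[OF assms] unfolding fib_def by simp_all

lemma fib_linear_id:
  assumes "is_vpb X DX B" "x \<in> X"
  shows "fib_linear B B (\<lambda>v. v) x"
  using vector_space_onD(2,3)[OF is_vpbD(4)[OF assms]] unfolding fib_linear_def by blast

lemma fib_linear_zero:
  assumes "is_vpb X DX B" "is_vpb X DX C" "x \<in> X"
  shows "fib_linear B C (\<lambda>v. pb_zero C (pb_proj B v)) x"
proof -
  note vs = is_vpbD(4)[OF assms(2,3)]
  have "pb_proj B b = x" if "b \<in> fib B x" for b using that unfolding fib_def by simp
  then show ?thesis
    using is_vpb_zero_fib[OF assms(2,3)] vector_space_onD(1,2,3,6)[OF vs] vector_space_on_smul_zero[OF vs]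
      vector_space_onD(2,3)[OF is_vpbD(4)[OF assms(1,3)]]
    unfolding fib_linear_def by auto
qed

lemma fib_linear_pair:
  assumes "fib_linear B B1 f x" "fib_linear B B2 g x"
  shows "fib_linear B (dsum B1 B2) (\<lambda>v. (f v, g v)) x"
  using assms unfolding fib_linear_def by (simp add: fib_dsum)

lemma fib_linear_Incl1:
  assumes "is_vpb X DX B1" "is_vpb X DX B2" "x \<in> X"
  shows "fib_linear B1 (dsum B1 B2) (Incl1 B1 B2) x"
  unfolding Incl1_def[abs_def]
  by (rule fib_linear_pair[OF fib_linear_id[OF assms(1,3)] fib_linear_zero[OF assms]])

lemma fib_linear_Incl2:
  assumes "is_vpb X DX B1" "is_vpb X DX B2" "x \<in> X"
  shows "fib_linear B2 (dsum B1 B2) (Incl2 B1 B2) x"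
  unfolding Incl2_def[abs_def]
  by (rule fib_linear_pair[OF fib_linear_zero[OF assms(2,1,3)] fib_linear_id[OF assms(2,3)]])

lemma smooth_Incl1:
  assumes "is_vpb X DX B1" "is_vpb X DX B2"
  shows "smooth_betw (pb_tot B1) (pb_diff B1) (pb_tot (dsum B1 B2)) (pb_diff (dsum B1 B2)) (Incl1 B1 B2)"
  unfolding Incl1_def[abs_def] dsum_simps
  by (rule smooth_betw_pair_fibprod[OF is_vpbD(2)[OF assms(1)] smooth_betw_id[OF is_vpbD(2)[OF assms(1)]]
        smooth_betw_zero_proj[OF assms]])
    (use is_vpb_zero_proj[OF assms(2) is_vpb_proj_mem[OF assms(1)]] in simp)

lemma smooth_Incl2:
  assumes "is_vpb X DX B1" "is_vpb X DX B2"
  shows "smooth_betw (pb_tot B2) (pb_diff B2) (pb_tot (dsum B1 B2)) (pb_diff (dsum B1 B2)) (Incl2 B1 B2)"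
  unfolding Incl2_def[abs_def] dsum_simps
  by (rule smooth_betw_pair_fibprod[OF is_vpbD(2)[OF assms(2)] smooth_betw_zero_proj[OF assms(2,1)]
        smooth_betw_id[OF is_vpbD(2)[OF assms(2)]]])
    (use is_vpb_zero_proj[OF assms(1) is_vpb_proj_mem[OF assms(2)]] in simp)

lemma smooth_dsum_fst: "smooth_betw (pb_tot (dsum B C)) (pb_diff (dsum B C)) (pb_tot B) (pb_diff B) fst"
  and smooth_dsum_snd: "smooth_betw (pb_tot (dsum B C)) (pb_diff (dsum B C)) (pb_tot C) (pb_diff C) snd"
  unfolding smooth_betw_def dsum_simps using fibprod_diffD(3,4) by (auto simp: fibprod_def)

lemma proj_dsum_fst: "v \<in> pb_tot (dsum B C) \<Longrightarrow> pb_proj B (fst v) = pb_proj (dsum B C) v"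
  and proj_dsum_snd: "v \<in> pb_tot (dsum B C) \<Longrightarrow> pb_proj C (snd v) = pb_proj (dsum B C) v"
  by (auto simp: fibprod_def)

lemma proj_Incl1: "pb_proj (dsum B1 B2) (Incl1 B1 B2 v) = pb_proj B1 v"
  unfolding Incl1_def by simp

lemma proj_Incl2:
  assumes "is_vpb X DX B1" "is_vpb X DX B2" "v \<in> pb_tot B2"
  shows "pb_proj (dsum B1 B2) (Incl2 B1 B2 v) = pb_proj B2 v"
  unfolding Incl2_def using is_vpb_zero_proj(2)[OF assms(1) is_vpb_proj_mem[OF assms(2,3)]] by simp

lemma tens_Incl_add:
  assumes V1: "is_vpb X DX B1" and V2: "is_vpb X DX B2" and x: "x \<in> X"
    and l: "l \<in> fib L x" and a: "a \<in> fib B1 x" and b: "b \<in> fib B2 x"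
  shows "pb_add (tensor_pre X L (dsum B1 B2)) (tens L (dsum B1 B2) l (Incl1 B1 B2 a))
      (tens L (dsum B1 B2) l (Incl2 B1 B2 b)) = tens L (dsum B1 B2) l (a, b)"
proof -
  have "pb_add (dsum B1 B2) (Incl1 B1 B2 a) (Incl2 B1 B2 b) = (a, b)"
    using a b vector_space_on_add_zero_right[OF is_vpbD(4)[OF V1 x] a] vector_space_onD(6)[OF is_vpbD(4)[OF V2 x] b]
    unfolding Incl1_def Incl2_def fib_def by simp
  with tens_add_right[OF l fib_linearD(1)[OF fib_linear_Incl1[OF V1 V2 x] a]
      fib_linearD(1)[OF fib_linear_Incl2[OF V1 V2 x] b]]
  show ?thesis by simp
qed

lemma Lam1_simps [simp]:
  "pb_tot (Lam1 X DX) = (\<lambda>(x, \<omega>). lcls DX x \<omega>) ` (X \<times> Omega1 DX)"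
  "pb_proj (Lam1 X DX) = fst"
  unfolding Lam1_def by simp_all

lemma fst_lcls [simp]: "fst (lcls DX x \<omega>) = x"
  unfolding lcls_def by simp

lemma smooth_Lam1_proj:
  assumes dX: "diffeology X DX"
  shows "smooth_betw (pb_tot (Lam1 X DX)) (pb_diff (Lam1 X DX)) X DX (pb_proj (Lam1 X DX))"
  unfolding smooth_betw_def
proof (intro conjI ballI)
  fix v assume "v \<in> pb_tot (Lam1 X DX)"
  then show "pb_proj (Lam1 X DX) v \<in> X" by auto
next
  fix P assume "P \<in> pb_diff (Lam1 X DX)"
  then obtain n U p where P: "P = (n, U, p)" and op: "open_in_Rn n U"
    and loc: "\<And>u. u \<in> U \<Longrightarrow> \<exists>V r. open_in_Rn n V \<and> u \<in> V \<and> V \<subseteq> U \<and>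
        (n, V, r) \<in> prod_diff (subset_diff DX X) (Omega1_diff DX) \<and>
        (\<forall>v\<in>V. p v = (\<lambda>(x, \<omega>). lcls DX x \<omega>) (r v))"
    unfolding Lam1_def quot_diff_def by auto
  have chart: "\<exists>V. open_in_Rn n V \<and> u \<in> V \<and> V \<subseteq> U \<and> (fst \<circ> p) ` V \<subseteq> X \<and>
      plot_of n V (fst \<circ> p) \<in> DX" if u: "u \<in> U" for u
  proof -
    obtain V r where V: "open_in_Rn n V" "u \<in> V" "V \<subseteq> U"
      "(n, V, r) \<in> prod_diff (subset_diff DX X) (Omega1_diff DX)"
      "\<forall>v\<in>V. p v = (\<lambda>(x, \<omega>). lcls DX x \<omega>) (r v)" using loc[OF u] by blast
    have "plot_of n V (fst \<circ> r) = plot_of n V (fst \<circ> p)"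
      by (rule plot_of_cong) (use V(5) in \<open>simp add: split_beta\<close>)
    moreover have "restrict (fst \<circ> r) V = restrict (fst \<circ> p) V"
      using V(5) by (auto simp: split_beta)
    ultimately show ?thesis
      using prod_diffD(3)[OF V(4)] V(1-3) unfolding subset_diff_def plot_of_def by force
  qed
  have "plot_of n U (fst \<circ> p) \<in> DX"
    by (rule diffeology_local[OF dX op]) (use chart in blast)+
  then show "case P of (n, U, p) \<Rightarrow> plot_of n U (pb_proj (Lam1 X DX) \<circ> p) \<in> DX"
    unfolding P by simp
qed

lemma shift_0[simp]: "shift x i 0 = x"
  unfolding shift_def by simp

lemma shift_shift: "shift (shift x k a) k b = shift x k (a + b)"
  unfolding shift_def by (rule ext) simp

lemma shift_app: "shift x k t i = x i + (if i = k then t else 0)"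
  unfolding shift_def by simp

lemma Rn_shift: "x \<in> Rn n \<Longrightarrow> k < n \<Longrightarrow> shift x k t \<in> Rn n"
  unfolding Rn_def shift_def by auto

lemma open_in_Rn_subset: "open_in_Rn n U \<Longrightarrow> U \<subseteq> Rn n"
  unfolding open_in_Rn_def by blast

lemma open_in_RnD:
  assumes "open_in_Rn n U" "x \<in> U"
  obtains e where "e > 0" "\<And>y. y \<in> Rn n \<Longrightarrow> (\<forall>i<n. \<bar>y i - x i\<bar> < e) \<Longrightarrow> y \<in> U"
  using assms unfolding open_in_Rn_def by blast

lemma eventually_shift_in:
  assumes op: "open_in_Rn n U" and x: "x \<in> U" and k: "k < n"
  shows "eventually (\<lambda>t. shift x k t \<in> U) (nhds 0)"
proof -
  obtain e where e: "e > 0" "\<And>y. y \<in> Rn n \<Longrightarrow> (\<forall>i<n. \<bar>y i - x i\<bar> < e) \<Longrightarrow> y \<in> U"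
    using open_in_RnD[OF op x] by blast
  have "shift x k t \<in> U" if "\<bar>t\<bar> < e" for t
    by (rule e(2)[OF Rn_shift[OF open_in_Rn_subset[OF op, THEN subsetD, OF x] k]])
      (use that e(1) in \<open>auto simp: shift_app\<close>)
  then show ?thesis unfolding eventually_nhds_metric using e(1) by (auto simp: dist_real_def)
qed

lemma pd_local:
  assumes op: "open_in_Rn n U" and x: "x \<in> U" and k: "k < n"
    and eq: "\<And>y. y \<in> U \<Longrightarrow> f y = g y"
  shows "pd k f x = pd k g x"
  unfolding pd_def
proof (rule deriv_cong_ev)
  show "eventually (\<lambda>t. f (shift x k t) = g (shift x k t)) (nhds 0)"
    using eventually_shift_in[OF op x k] by (rule eventually_mono) (rule eq)
qed simp

lemma iter_pd_Cons: "iter_pd (k # ks) f = pd k (iter_pd ks f)"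
  unfolding iter_pd_def by simp

lemma iter_pd_Nil: "iter_pd [] f = f"
  unfolding iter_pd_def by simp

lemma iter_pd_append: "iter_pd (ks @ [i]) f = iter_pd ks (pd i f)"
  unfolding iter_pd_def by simp

lemma iter_pd_local:
  assumes op: "open_in_Rn n U" and ks: "set ks \<subseteq> {..<n}"
    and eq: "\<And>y. y \<in> U \<Longrightarrow> f y = g y"
  shows "\<And>x. x \<in> U \<Longrightarrow> iter_pd ks f x = iter_pd ks g x"
  using ks
proof (induction ks)
  case Nil
  then show ?case using eq by (simp add: iter_pd_Nil)
next
  case (Cons k ks)
  then have k: "k < n" and ks': "set ks \<subseteq> {..<n}" by auto
  show ?case unfolding iter_pd_Cons
    by (rule pd_local[OF op Cons.prems(1) k]) (rule Cons.IH[OF _ ks'])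
qed

lemma differentiable_ev_cong:
  fixes f g :: "real \<Rightarrow> real"
  assumes "f differentiable (at 0)" "eventually (\<lambda>t. f t = g t) (nhds 0)"
  shows "g differentiable (at 0)"
proof -
  obtain D where D: "(f has_real_derivative D) (at 0)"
    using assms(1) by (rule real_differentiableE)
  have "(g has_field_derivative D) (at 0)"
    using D DERIV_cong_ev[OF refl assms(2) refl] by simp
  then show ?thesis unfolding real_differentiable_def by blast
qed

lemma smooth_fnD:
  assumes "smooth_fn n U f" "set ks \<subseteq> {..<n}"
  shows "continuous_on U (iter_pd ks f)"
    "\<And>i x. i < n \<Longrightarrow> x \<in> U \<Longrightarrow> (\<lambda>t. iter_pd ks f (shift x i t)) differentiable at 0"
proof -
  note h = assms(1)[unfolded smooth_fn_def, rule_format, OF assms(2)]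
  show "continuous_on U (iter_pd ks f)" using h by (elim conjE)
  fix i x assume "i < n" "x \<in> U"
  then show "(\<lambda>t. iter_pd ks f (shift x i t)) differentiable at 0" using h by blast
qed

lemma smooth_fn_local:
  assumes op: "open_in_Rn n U" and sm: "smooth_fn n U f"
    and eq: "\<And>y. y \<in> U \<Longrightarrow> f y = g y"
  shows "smooth_fn n U g"
  unfolding smooth_fn_def
proof (intro allI impI, intro conjI)
  fix ks :: "nat list" assume ks: "set ks \<subseteq> {..<n}"
  have e: "\<And>x. x \<in> U \<Longrightarrow> iter_pd ks f x = iter_pd ks g x" by (rule iter_pd_local[OF op ks eq])
  show "continuous_on U (iter_pd ks g)"
    using smooth_fnD(1)[OF sm ks] e by (metis continuous_on_cong)
  show "\<forall>i<n. \<forall>x\<in>U. (\<lambda>t. iter_pd ks g (shift x i t)) differentiable at 0"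
  proof (intro allI impI ballI)
    fix i x assume i: "i < n" and x: "x \<in> U"
    have "(\<lambda>t. iter_pd ks f (shift x i t)) differentiable at 0"
      by (rule smooth_fnD(2)[OF sm ks i x])
    moreover have "eventually (\<lambda>t. iter_pd ks f (shift x i t) = iter_pd ks g (shift x i t)) (nhds 0)"
      using eventually_shift_in[OF op x i] by (rule eventually_mono) (rule e)
    ultimately show "(\<lambda>t. iter_pd ks g (shift x i t)) differentiable at 0"
      by (rule differentiable_ev_cong)
  qed
qed

lemma smooth_fn_pd:
  assumes op: "open_in_Rn n U" and sm: "smooth_fn n U f" and i: "i < n"
  shows "smooth_fn n U (pd i f)"
  unfolding smooth_fn_def
proof (intro allI impI, intro conjI)
  fix ks :: "nat list" assume ks: "set ks \<subseteq> {..<n}"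
  have ks': "set (ks @ [i]) \<subseteq> {..<n}" using ks i by auto
  show "continuous_on U (iter_pd ks (pd i f))"
    using smooth_fnD(1)[OF sm ks'] unfolding iter_pd_append .
  show "\<forall>j<n. \<forall>x\<in>U. (\<lambda>t. iter_pd ks (pd i f) (shift x j t)) differentiable at 0"
    using smooth_fnD(2)[OF sm ks'] unfolding iter_pd_append by blast
qed

lemma open_fun_box:
  fixes A :: "rv set"
  assumes "open A" "y \<in> A"
  obtains r F where "r > 0" "finite F" "\<And>v. \<forall>i\<in>F. \<bar>v i - y i\<bar> < r \<Longrightarrow> v \<in> A"
proof -
  have "openin (product_topology (\<lambda>i. euclidean) UNIV) A" using assms(1) unfolding open_fun_def .
  from product_topology_open_contains_basis[OF this assms(2)]
  obtain Xs where Xs: "y \<in> (\<Pi>\<^sub>E i\<in>UNIV. Xs i)" "\<And>i. open (Xs i)" "finite {i. Xs i \<noteq> UNIV}"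
    "(\<Pi>\<^sub>E i\<in>UNIV. Xs i) \<subseteq> A" by auto
  let ?F = "{i. Xs i \<noteq> UNIV}"
  have "\<exists>r>0. ball (y i) r \<subseteq> Xs i" for i
    using Xs(1,2) open_contains_ball by blast
  then obtain rr where rr: "\<And>i. rr i > 0" "\<And>i. ball (y i) (rr i) \<subseteq> Xs i" by metis
  define r where "r = Min (insert 1 (rr ` ?F))"
  have fin: "finite (insert 1 (rr ` ?F))" using Xs(3) by simp
  have r: "r > 0" "\<And>i. i \<in> ?F \<Longrightarrow> r \<le> rr i"
    unfolding r_def using fin rr(1) by (auto simp: Min_gr_iff intro: Min_le)
  have "v \<in> A" if v: "\<forall>i\<in>?F. \<bar>v i - y i\<bar> < r" for v
  proof -
    have "v i \<in> Xs i" for i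
    proof (cases "i \<in> ?F")
      case True
      then have "v i \<in> ball (y i) (rr i)" using v r(2) by (fastforce simp: dist_real_def abs_minus_commute)
      then show ?thesis using rr(2) by blast
    qed simp
    then show ?thesis using Xs(4) by blast
  qed
  with r(1) Xs(3) that show ?thesis by blast
qed

lemma continuous_on_Rn_box:
  fixes g :: "rv \<Rightarrow> real"
  assumes c: "continuous_on U g" and y: "y \<in> U" and U: "U \<subseteq> Rn n" and e: "e > 0"
  shows "\<exists>r>0. \<forall>v\<in>U. (\<forall>i<n. \<bar>v i - y i\<bar> < r) \<longrightarrow> \<bar>g v - g y\<bar> < e"
proof -
  have "open (ball (g y) e)" "g y \<in> ball (g y) e" using e by auto
  then obtain A where A: "open A" "y \<in> A" "\<forall>v\<in>U. v \<in> A \<longrightarrow> g v \<in> ball (g y) e"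
    using c y unfolding continuous_on_topological by metis
  obtain r F where rF: "r > 0" "finite F" "\<And>v. \<forall>i\<in>F. \<bar>v i - y i\<bar> < r \<Longrightarrow> v \<in> A"
    using open_fun_box[OF A(1,2)] by blast
  have "\<forall>v\<in>U. (\<forall>i<n. \<bar>v i - y i\<bar> < r) \<longrightarrow> \<bar>g v - g y\<bar> < e"
  proof (intro ballI impI)
    fix v assume v: "v \<in> U" "\<forall>i<n. \<bar>v i - y i\<bar> < r"
    have "\<bar>v i - y i\<bar> < r" for i
    proof (cases "i < n")
      case True then show ?thesis using v by blast
    next
      case False
      then have "v i = 0" "y i = 0" using U v y unfolding Rn_def by auto
      then show ?thesis using rF by simp
    qed
    then have "v \<in> A" using rF by blast
    then have "g v \<in> ball (g y) e" using A v by blast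
    then show "\<bar>g v - g y\<bar> < e" by (simp add: dist_real_def abs_minus_commute)
  qed
  then show ?thesis using rF by blast
qed

section \<open>A chain rule for partial derivatives\<close>

lemma shift_mean_value_bound:
  fixes f :: "rv \<Rightarrow> real"
  assumes fd: "\<And>x. x \<in> U \<Longrightarrow> (\<lambda>t. f (shift x k t)) differentiable (at 0)"
    and zU: "\<And>s. s \<in> closed_segment 0 \<Delta> \<Longrightarrow> shift z k s \<in> U"
    and bnd: "\<And>s. s \<in> closed_segment 0 \<Delta> \<Longrightarrow> \<bar>pd k f (shift z k s) - c\<bar> \<le> \<epsilon>"
  shows "\<bar>f (shift z k \<Delta>) - f z - c * \<Delta>\<bar> \<le> \<epsilon> * \<bar>\<Delta>\<bar>"
proof -
  let ?S = "closed_segment 0 \<Delta>"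
  let ?F = "\<lambda>s. f (shift z k s)"
  let ?\<psi> = "\<lambda>s. ?F s - c * s"
  have der: "(?\<psi> has_field_derivative (pd k f (shift z k s) - c)) (at s within ?S)" if s: "s \<in> ?S" for s
  proof -
    have "(\<lambda>r. f (shift (shift z k s) k r)) differentiable (at 0)" by (rule fd[OF zU[OF s]])
    then have "DERIV (\<lambda>r. ?F (r + s)) 0 :> pd k f (shift z k s)"
      unfolding pd_def by (simp add: DERIV_deriv_iff_real_differentiable shift_shift add.commute)
    then have "DERIV ?F (0 + s) :> pd k f (shift z k s)" by (simp only: DERIV_shift)
    then have "DERIV ?F s :> pd k f (shift z k s)" by simp
    then have "DERIV ?\<psi> s :> pd k f (shift z k s) - c" by (intro derivative_eq_intros) auto
    then show ?thesis by (rule has_field_derivative_at_within)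
  qed
  have "norm (?\<psi> \<Delta> - ?\<psi> 0) \<le> \<epsilon> * norm (\<Delta> - 0)"
    by (rule field_differentiable_bound[OF convex_closed_segment der]) (use bnd in auto)
  then show ?thesis by (simp add: algebra_simps)
qed

text \<open>This is where continuity of the partial derivative enters.\<close>

lemma partial_increment_estimate:
  assumes op: "open_in_Rn n U" and yU: "y \<in> U" and k: "k < n"
    and fd: "\<And>x. x \<in> U \<Longrightarrow> (\<lambda>t. f (shift x k t)) differentiable (at 0)"
    and fc: "continuous_on U (pd k f)" and \<epsilon>: "\<epsilon> > 0"
  obtains \<rho> where "\<rho> > 0"
    "\<And>v h. v \<in> Rn n \<Longrightarrow> \<forall>i<n. \<bar>v i - y i\<bar> < \<rho> \<Longrightarrow> \<bar>h\<bar> < \<rho> \<Longrightarrow>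
       \<bar>f (shift v k h) - f v - pd k f y * h\<bar> \<le> \<epsilon> * \<bar>h\<bar>"
proof -
  obtain e where e: "e > 0" "\<And>v. v \<in> Rn n \<Longrightarrow> (\<forall>i<n. \<bar>v i - y i\<bar> < e) \<Longrightarrow> v \<in> U"
    using open_in_RnD[OF op yU] by blast
  obtain r where r: "r > 0" "\<And>v. v \<in> U \<Longrightarrow> (\<forall>i<n. \<bar>v i - y i\<bar> < r) \<Longrightarrow> \<bar>pd k f v - pd k f y\<bar> < \<epsilon>"
    using continuous_on_Rn_box[OF fc yU open_in_Rn_subset[OF op] \<epsilon>] by blast
  define \<rho> where "\<rho> = min e r / 2"
  have "\<bar>f (shift v k h) - f v - pd k f y * h\<bar> \<le> \<epsilon> * \<bar>h\<bar>"
    if v: "v \<in> Rn n" "\<forall>i<n. \<bar>v i - y i\<bar> < \<rho>" and h: "\<bar>h\<bar> < \<rho>" for v h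
  proof (rule shift_mean_value_bound[where U=U, OF fd])
    fix s assume "s \<in> closed_segment 0 h"
    then have "\<bar>s\<bar> \<le> \<bar>h\<bar>" by (auto simp: closed_segment_eq_real_ivl split: if_splits)
    have close: "\<forall>i<n. \<bar>shift v k s i - y i\<bar> < min e r"
    proof (intro allI impI)
      fix i assume "i < n"
      then have "\<bar>v i - y i\<bar> < min e r / 2" using v(2) unfolding \<rho>_def by blast
      moreover have "\<bar>shift v k s i - y i\<bar> \<le> \<bar>v i - y i\<bar> + \<bar>s\<bar>"
        unfolding shift_def by (simp; arith)
      ultimately show "\<bar>shift v k s i - y i\<bar> < min e r"
        using \<open>\<bar>s\<bar> \<le> \<bar>h\<bar>\<close> h unfolding \<rho>_def by linarith
    qed
    show sU: "shift v k s \<in> U" by (rule e(2)[OF Rn_shift[OF v(1) k]]) (use close in auto)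
    show "\<bar>pd k f (shift v k s) - pd k f y\<bar> \<le> \<epsilon>" using r(2)[OF sU] close by force
  qed
  moreover have "\<rho> > 0" using e r unfolding \<rho>_def by simp
  ultimately show ?thesis using that by blast
qed

lemma tendsto_zero_if_small_wrt:
  fixes R \<Delta> :: "real \<Rightarrow> real"
  assumes small: "\<And>\<epsilon>. \<epsilon> > 0 \<Longrightarrow> eventually (\<lambda>t. \<bar>R t\<bar> \<le> \<epsilon> * \<bar>\<Delta> t\<bar>) (at 0)"
    and \<Delta>: "((\<lambda>t. \<Delta> t / t) \<longlongrightarrow> d) (at 0)"
  shows "((\<lambda>t. R t / t) \<longlongrightarrow> 0) (at 0)"
  unfolding tendsto_iff
proof (intro allI impI)
  fix \<epsilon> :: real assume \<epsilon>: "\<epsilon> > 0"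
  define \<epsilon>' where "\<epsilon>' = \<epsilon> / (2 * (\<bar>d\<bar> + 1))"
  have \<epsilon>': "\<epsilon>' > 0" unfolding \<epsilon>'_def using \<epsilon> by (intro divide_pos_pos) auto
  have "eventually (\<lambda>t. \<bar>\<Delta> t / t - d\<bar> < 1) (at 0)"
    using tendstoD[OF \<Delta>, of 1] by (simp add: dist_real_def)
  then show "eventually (\<lambda>t. dist (R t / t) 0 < \<epsilon>) (at 0)"
  proof (rule eventually_mono[OF eventually_conj[OF small[OF \<epsilon>']]], elim conjE)
    fix t assume R: "\<bar>R t\<bar> \<le> \<epsilon>' * \<bar>\<Delta> t\<bar>" and q: "\<bar>\<Delta> t / t - d\<bar> < 1"
    have "\<bar>R t / t\<bar> \<le> \<epsilon>' * \<bar>\<Delta> t / t\<bar>"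
      using R by (simp add: abs_divide divide_right_mono)
    also have "\<dots> \<le> \<epsilon>' * (\<bar>d\<bar> + 1)" using q \<epsilon>' by (intro mult_left_mono) linarith+
    also have "\<dots> < \<epsilon>" unfolding \<epsilon>'_def using \<epsilon> by (simp add: field_simps add_pos_nonneg)
    finally show "dist (R t / t) 0 < \<epsilon>" by (simp add: dist_real_def)
  qed
qed

text \<open>One step of the telescoping argument: \<open>z (Suc k) t\<close> and \<open>z k t\<close> differ only in the
  \<open>k\<close>-th coordinate.\<close>

lemma chain_pd_step:
  fixes f :: "rv \<Rightarrow> real" and \<gamma> :: "real \<Rightarrow> rv" and d :: "nat \<Rightarrow> real"
  defines "z \<equiv> \<lambda>k t i. if i < k then \<gamma> t i else \<gamma> 0 i"
  assumes op: "open_in_Rn n U" and yU: "\<gamma> 0 \<in> U" and k: "k < n"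
    and fd: "\<And>x. x \<in> U \<Longrightarrow> (\<lambda>t. f (shift x k t)) differentiable (at 0)"
    and fc: "continuous_on U (pd k f)"
    and \<gamma>d: "\<And>i. i < n \<Longrightarrow> ((\<lambda>t. \<gamma> t i) has_real_derivative d i) (at 0)"
  shows "((\<lambda>t. (f (z (Suc k) t) - f (z k t)) / t) \<longlongrightarrow> pd k f (\<gamma> 0) * d k) (at 0)"
proof -
  define y where "y = \<gamma> 0"
  define \<Delta> where "\<Delta> = (\<lambda>t. \<gamma> t k - y k)"
  have close: "eventually (\<lambda>t. \<forall>i\<in>{..<n}. \<bar>\<gamma> t i - y i\<bar> < \<rho>) (at 0)" if "\<rho> > 0" for \<rho>
  proof (rule eventually_ball_finite[OF finite_lessThan], intro ballI)
    fix i assume "i \<in> {..<n}"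
    then have "((\<lambda>t. \<gamma> t i) \<longlongrightarrow> y i) (at 0)"
      using \<gamma>d DERIV_isCont unfolding isCont_def y_def by blast
    from tendstoD[OF this \<open>\<rho> > 0\<close>] show "eventually (\<lambda>t. \<bar>\<gamma> t i - y i\<bar> < \<rho>) (at 0)"
      by (simp add: dist_real_def)
  qed
  have z_Suc: "z (Suc k) t = shift (z k t) k (\<Delta> t)" for t
    unfolding z_def shift_def \<Delta>_def y_def by (rule ext) auto
  have zR: "z k t \<in> Rn n" for t
    using yU open_in_Rn_subset[OF op] k unfolding Rn_def z_def by auto
  have \<Delta>d: "((\<lambda>t. \<Delta> t / t) \<longlongrightarrow> d k) (at 0)"
    using \<gamma>d[OF k] unfolding DERIV_def \<Delta>_def y_def by simp
  have "eventually (\<lambda>t. \<bar>f (z (Suc k) t) - f (z k t) - pd k f y * \<Delta> t\<bar> \<le> \<epsilon> * \<bar>\<Delta> t\<bar>) (at 0)"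
    if "\<epsilon> > 0" for \<epsilon>
  proof -
    obtain \<rho> where \<rho>: "\<rho> > 0" "\<And>v h. v \<in> Rn n \<Longrightarrow> \<forall>i<n. \<bar>v i - y i\<bar> < \<rho> \<Longrightarrow> \<bar>h\<bar> < \<rho> \<Longrightarrow>
        \<bar>f (shift v k h) - f v - pd k f y * h\<bar> \<le> \<epsilon> * \<bar>h\<bar>"
      using partial_increment_estimate[OF op yU[folded y_def] k fd fc \<open>\<epsilon> > 0\<close>] by blast
    show ?thesis unfolding z_Suc
    proof (rule eventually_mono[OF close[OF \<rho>(1)]])
      fix t assume t: "\<forall>i\<in>{..<n}. \<bar>\<gamma> t i - y i\<bar> < \<rho>"
      show "\<bar>f (shift (z k t) k (\<Delta> t)) - f (z k t) - pd k f y * \<Delta> t\<bar> \<le> \<epsilon> * \<bar>\<Delta> t\<bar>"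
        by (rule \<rho>(2)[OF zR]) (use t \<rho>(1) k in \<open>auto simp: z_def \<Delta>_def y_def\<close>)
    qed
  qed
  from tendsto_zero_if_small_wrt[OF this \<Delta>d]
  have "((\<lambda>t. (f (z (Suc k) t) - f (z k t) - pd k f y * \<Delta> t) / t + pd k f y * (\<Delta> t / t))
      \<longlongrightarrow> 0 + pd k f y * d k) (at 0)"
    by (intro tendsto_add tendsto_mult_left \<Delta>d)
  then show ?thesis by (simp add: diff_divide_distrib y_def)
qed

lemma chain_pd:
  fixes f :: "rv \<Rightarrow> real" and \<gamma> :: "real \<Rightarrow> rv" and d :: "nat \<Rightarrow> real"
  assumes op: "open_in_Rn n U"
    and fd: "\<And>i x. i < n \<Longrightarrow> x \<in> U \<Longrightarrow> (\<lambda>t. f (shift x i t)) differentiable (at 0)"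
    and fc: "\<And>i. i < n \<Longrightarrow> continuous_on U (pd i f)"
    and \<gamma>U: "eventually (\<lambda>t. \<gamma> t \<in> U) (nhds 0)"
    and \<gamma>d: "\<And>i. i < n \<Longrightarrow> ((\<lambda>t. \<gamma> t i) has_real_derivative d i) (at 0)"
  shows "((\<lambda>t. f (\<gamma> t)) has_real_derivative (\<Sum>i<n. pd i f (\<gamma> 0) * d i)) (at 0)"
proof -
  define z where "z = (\<lambda>k t i. if i < k then \<gamma> t i else \<gamma> 0 i)"
  have yU: "\<gamma> 0 \<in> U" by (rule eventually_nhds_x_imp_x[OF \<gamma>U])
  have telescope: "eventually (\<lambda>t. (\<Sum>k<n. (f (z (Suc k) t) - f (z k t)) / t) =
      (f (\<gamma> (0 + t)) - f (\<gamma> 0)) / t) (at 0)"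
  proof (rule eventually_mono)
    show "eventually (\<lambda>t. \<gamma> t \<in> U) (at 0)"
      using \<gamma>U unfolding eventually_at_filter by (rule eventually_mono) simp
  next
    fix t assume "\<gamma> t \<in> U"
    then have "\<gamma> t \<in> Rn n" "\<gamma> 0 \<in> Rn n" using open_in_Rn_subset[OF op] yU by auto
    then have "z n t = \<gamma> t" "z 0 t = \<gamma> 0" unfolding z_def Rn_def by (auto intro!: ext)
    then show "(\<Sum>k<n. (f (z (Suc k) t) - f (z k t)) / t) = (f (\<gamma> (0 + t)) - f (\<gamma> 0)) / t"
      using sum_lessThan_telescope[of "\<lambda>k. f (z k t)" n]
      by (simp add: sum_divide_distrib[symmetric])
  qed
  have "((\<lambda>t. \<Sum>k<n. (f (z (Suc k) t) - f (z k t)) / t) \<longlongrightarrow> (\<Sum>k<n. pd k f (\<gamma> 0) * d k)) (at 0)"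
    using chain_pd_step[OF op yU _ fd fc \<gamma>d] unfolding z_def by (intro tendsto_sum) simp
  from Lim_transform_eventually[OF this telescope]
  show ?thesis unfolding DERIV_def .
qed

lemma pd_comp_smooth_map:
  assumes op: "open_in_Rn n U" and sm: "smooth_fn n U f"
    and opW: "open_in_Rn m W" and smF: "smooth_map m W n F" and FW: "F ` W \<subseteq> U"
    and w: "w \<in> W" and j: "j < m"
  shows "pd j (\<lambda>v. f (F v)) w = (\<Sum>i<n. pd i f (F w) * pd j (\<lambda>v. F v i) w)"
proof -
  have "((\<lambda>t. f (F (shift w j t))) has_real_derivative
      (\<Sum>i<n. pd i f (F (shift w j 0)) * pd j (\<lambda>v. F v i) w)) (at 0)"
  proof (rule chain_pd[OF op])
    fix i x assume "i < n" "x \<in> U"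
    then show "(\<lambda>t. f (shift x i t)) differentiable (at 0)"
      using smooth_fnD(2)[OF sm, of "[]"] by (simp add: iter_pd_Nil)
  next
    fix i assume "i < n"
    then show "continuous_on U (pd i f)"
      using smooth_fnD(1)[OF sm, of "[i]"] by (simp add: iter_pd_Cons iter_pd_Nil)
  next
    show "eventually (\<lambda>t. F (shift w j t) \<in> U) (nhds 0)"
      using eventually_shift_in[OF opW w j] by (rule eventually_mono) (use FW in auto)
  next
    fix i assume "i < n"
    then have "(\<lambda>t. F (shift w j t) i) differentiable (at 0)"
      using smooth_fnD(2)[OF _ _ j w, of "\<lambda>v. F v i" "[]"] smF
      by (simp add: iter_pd_Nil smooth_map_def)
    then show "((\<lambda>t. F (shift w j t) i) has_real_derivative pd j (\<lambda>v. F v i) w) (at 0)"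
      unfolding pd_def by (simp add: DERIV_deriv_iff_real_differentiable)
  qed
  then show ?thesis unfolding pd_def by (simp add: DERIV_imp_deriv)
qed

lemma dform_at:
  "(n, U, p) \<in> DX \<Longrightarrow> dform DX h (n, U, p) = restrict (\<lambda>u i. if i < n then pd i (h \<circ> p) u else 0) U"
  unfolding dform_def by simp

lemma smooth_fn_plot:
  assumes "smooth_betw X DX UNIV real_diff h" "(n, U, p) \<in> DX"
  shows "smooth_fn n U (restrict (h \<circ> p) U)"
  using smooth_betwD[OF assms] unfolding real_diff_def plot_of_def by simp

lemma dform_coeff_smooth:
  assumes dX: "diffeology X DX" and h: "smooth_betw X DX UNIV real_diff h"
    and P: "(n, U, p) \<in> DX" and i: "i < n"
  shows "smooth_fn n U (\<lambda>u. dform DX h (n, U, p) u i)"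
proof -
  have op: "open_in_Rn n U" by (rule diffeology_plotD(1)[OF dX P])
  have "smooth_fn n U (pd i (restrict (h \<circ> p) U))"
    by (rule smooth_fn_pd[OF op smooth_fn_plot[OF h P] i])
  then show ?thesis
  proof (rule smooth_fn_local[OF op])
    fix y assume y: "y \<in> U"
    have "pd i (restrict (h \<circ> p) U) y = pd i (h \<circ> p) y" by (rule pd_local[OF op y i]) simp
    then show "pd i (restrict (h \<circ> p) U) y = dform DX h (n, U, p) y i"
      unfolding dform_at[OF P] using y i by simp
  qed
qed

lemma dform_comp:
  assumes dX: "diffeology X DX" and h: "smooth_betw X DX UNIV real_diff h"
    and P: "(n, U, p) \<in> DX" and opW: "open_in_Rn m W" and smF: "smooth_map m W n F"
    and FW: "F ` W \<subseteq> U" and w: "w \<in> W" and j: "j < m"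
  shows "dform DX h (plot_of m W (p \<circ> F)) w j = (\<Sum>i<n. dform DX h (n, U, p) (F w) i * pd j (\<lambda>v. F v i) w)"
proof -
  let ?f = "restrict (h \<circ> p) U"
  have op: "open_in_Rn n U" by (rule diffeology_plotD(1)[OF dX P])
  have Fw: "F w \<in> U" using FW w by blast
  have "(m, W, restrict (p \<circ> F) W) \<in> DX"
    using diffeology_comp[OF dX P opW smF FW] unfolding plot_of_def .
  from dform_at[OF this, of h]
  have "dform DX h (plot_of m W (p \<circ> F)) w j = pd j (h \<circ> restrict (p \<circ> F) W) w"
    unfolding plot_of_def using w j by simp
  also have "\<dots> = pd j (\<lambda>v. ?f (F v)) w"
    by (rule pd_local[OF opW w j]) (use FW in auto)
  also have "\<dots> = (\<Sum>i<n. pd i ?f (F w) * pd j (\<lambda>v. F v i) w)"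
    by (rule pd_comp_smooth_map[OF op smooth_fn_plot[OF h P] opW smF FW w j])
  also have "\<dots> = (\<Sum>i<n. dform DX h (n, U, p) (F w) i * pd j (\<lambda>v. F v i) w)"
    using pd_local[OF op Fw, of _ ?f "h \<circ> p"] unfolding dform_at[OF P] using Fw by simp
  finally show ?thesis .
qed

lemma dform_Omega1:
  assumes dX: "diffeology X DX" and h: "smooth_betw X DX UNIV real_diff h"
  shows "dform DX h \<in> Omega1 DX"
  unfolding Omega1_def mem_Collect_eq
proof (intro conjI ballI)
  show "dform DX h \<in> extensional DX" unfolding dform_def by simp
next
  fix P assume "P \<in> DX"
  then show "case P of (n, U, p) \<Rightarrow> dform DX h (n, U, p) \<in> extensional U \<and>
      (\<forall>u\<in>U. dform DX h (n, U, p) u \<in> Rn n) \<and> (\<forall>i<n. smooth_fn n U (\<lambda>u. dform DX h (n, U, p) u i))"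
    using dform_coeff_smooth[OF dX h] by (cases P) (simp add: dform_at Rn_def)
next
  fix P assume "P \<in> DX"
  then show "case P of (n, U, p) \<Rightarrow> \<forall>m W F. open_in_Rn m W \<and> smooth_map m W n F \<and> F ` W \<subseteq> U \<longrightarrow>
      (\<forall>w\<in>W. \<forall>j<m. dform DX h (plot_of m W (p \<circ> F)) w j =
          (\<Sum>i<n. dform DX h (n, U, p) (F w) i * pd j (\<lambda>v. F v i) w))"
    using dform_comp[OF dX h] by (cases P) simp
qed

lemma sections_fib: "s \<in> sections X DX B \<Longrightarrow> x \<in> X \<Longrightarrow> s x \<in> fib B x"
  unfolding sections_def fib_def smooth_betw_def by auto

lemma sections_plot: "s \<in> sections X DX B \<Longrightarrow> (n, U, p) \<in> DX \<Longrightarrow> plot_of n U (s \<circ> p) \<in> pb_diff B"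
  unfolding sections_def using smooth_betwD by blast

lemma sectionsI:
  assumes "s \<in> extensional X" "\<And>x. x \<in> X \<Longrightarrow> s x \<in> fib B x"
    "\<And>n U p. (n, U, p) \<in> DX \<Longrightarrow> plot_of n U (s \<circ> p) \<in> pb_diff B"
  shows "s \<in> sections X DX B"
  unfolding sections_def smooth_betw_def using assms unfolding fib_def by auto

lemma sections_comp:
  assumes dX: "diffeology X DX" and s: "s \<in> sections X DX B"
    and g: "smooth_betw (pb_tot B) (pb_diff B) (pb_tot B') (pb_diff B') g"
    and proj: "\<And>v. v \<in> pb_tot B \<Longrightarrow> pb_proj B' (g v) = pb_proj B v"
  shows "restrict (g \<circ> s) X \<in> sections X DX B'"
proof (rule sectionsI)
  fix x assume "x \<in> X"
  then show "restrict (g \<circ> s) X x \<in> fib B' x"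
    using sections_fib[OF s] smooth_betw_mem[OF g] proj unfolding fib_def by auto
next
  fix n U p assume P: "(n, U, p) \<in> DX"
  have "plot_of n U (g \<circ> restrict (s \<circ> p) U) \<in> pb_diff B'"
    using smooth_betwD[OF g sections_plot[OF s P, unfolded plot_of_def]] .
  moreover have "plot_of n U (g \<circ> restrict (s \<circ> p) U) = plot_of n U (restrict (g \<circ> s) X \<circ> p)"
    using diffeology_plotD(3)[OF dX P] by (intro plot_of_cong) auto
  ultimately show "plot_of n U (restrict (g \<circ> s) X \<circ> p) \<in> pb_diff B'" by simp
qed simp

lemma func_diffD:
  assumes "(n, U, q) \<in> func_diff DX DY S"
  shows "open_in_Rn n U" "q ` U \<subseteq> S"
    "\<And>m W p. (m, W, p) \<in> DX \<Longrightarrow>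
       plot_of (n + m) (joinset n U W) (\<lambda>z. q (fpart n z) (p (spart n z))) \<in> DY"
  using assms unfolding func_diff_def by auto

lemma plot_of_in_func_diffI:
  assumes "open_in_Rn n U" "\<And>u. u \<in> U \<Longrightarrow> q u \<in> S"
    "\<And>m W p. (m, W, p) \<in> DX \<Longrightarrow>
       plot_of (n + m) (joinset n U W) (\<lambda>z. restrict q U (fpart n z) (p (spart n z))) \<in> DY"
  shows "plot_of n U q \<in> func_diff DX DY S"
  unfolding plot_of_def[of n U q] func_diff_def using assms by auto

lemma joinset_parts:
  assumes "z \<in> joinset n U W" "U \<subseteq> Rn n"
  shows "fpart n z \<in> U" "spart n z \<in> W"
proof -
  obtain u w where z: "z = (\<lambda>i. if i < n then u i else w (i - n))" "u \<in> U" "w \<in> W"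
    using assms(1) unfolding joinset_def by blast
  have "fpart n z = u" using z(2) assms(2) unfolding fpart_def z(1) Rn_def by (auto intro!: ext)
  moreover have "spart n z = w" unfolding spart_def z(1) by (auto intro!: ext)
  ultimately show "fpart n z \<in> U" "spart n z \<in> W" using z by simp_all
qed

lemma sec_diff_comp:
  assumes dX: "diffeology X DX" and Q: "(n, U, q) \<in> sec_diff X DX B"
    and g: "smooth_betw (pb_tot B) (pb_diff B) (pb_tot B') (pb_diff B') g"
    and proj: "\<And>v. v \<in> pb_tot B \<Longrightarrow> pb_proj B' (g v) = pb_proj B v"
  shows "plot_of n U (\<lambda>u. restrict (g \<circ> q u) X) \<in> sec_diff X DX B'"
  unfolding sec_diff_def
proof (rule plot_of_in_func_diffI)
  note QD = func_diffD[OF Q[unfolded sec_diff_def]]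
  show "open_in_Rn n U" by (rule QD(1))
  fix u assume "u \<in> U"
  then show "restrict (g \<circ> q u) X \<in> sections X DX B'"
    using sections_comp[OF dX _ g proj] QD(2) by blast
next
  note QD = func_diffD[OF Q[unfolded sec_diff_def]]
  fix m W p assume W: "(m, W, p) \<in> DX"
  let ?J = "joinset n U W" and ?r = "\<lambda>z. q (fpart n z) (p (spart n z))"
  have parts: "fpart n z \<in> U" "p (spart n z) \<in> X" if "z \<in> ?J" for z
    using joinset_parts[OF that open_in_Rn_subset[OF QD(1)]] diffeology_plotD(3)[OF dX W] by auto
  have "plot_of (n + m) ?J (g \<circ> restrict ?r ?J) \<in> pb_diff B'"
    using smooth_betwD[OF g QD(3)[OF W, unfolded plot_of_def]] .
  moreover have "plot_of (n + m) ?J (g \<circ> restrict ?r ?J) =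
      plot_of (n + m) ?J (\<lambda>z. restrict (\<lambda>u. restrict (g \<circ> q u) X) U (fpart n z) (p (spart n z)))"
    using parts by (intro plot_of_cong) simp
  ultimately show "plot_of (n + m) ?J (\<lambda>z. restrict (\<lambda>u. restrict (g \<circ> q u) X) U (fpart n z) (p (spart n z)))
      \<in> pb_diff B'" by simp
qed

section \<open>The direct sum of two connections\<close>

locale two_connections =
  fixes X :: "'a set" and DX :: "'a plot set"
    and B1 :: "('a, 'v) vpb" and B2 :: "('a, 'w) vpb"
    and N1 :: "('a \<Rightarrow> 'v) \<Rightarrow> ('a \<Rightarrow> ('a, 'a lam, 'v) tens)"
    and N2 :: "('a \<Rightarrow> 'w) \<Rightarrow> ('a \<Rightarrow> ('a, 'a lam, 'w) tens)"
  assumes dX: "diffeology X DX"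
    and V1: "is_vpb X DX B1" and V2: "is_vpb X DX B2"
    and C1: "is_connection X DX B1 N1" and C2: "is_connection X DX B2 N2"
begin

abbreviation "L \<equiv> Lam1 X DX"
abbreviation "S \<equiv> dsum B1 B2"
abbreviation "T \<equiv> tensor_bundle X DX L S"
abbreviation "T1 \<equiv> tensor_bundle X DX L B1"
abbreviation "T2 \<equiv> tensor_bundle X DX L B2"
abbreviation "TP \<equiv> tensor_pre X L S"
abbreviation "TP1 \<equiv> tensor_pre X L B1"
abbreviation "TP2 \<equiv> tensor_pre X L B2"
abbreviation "i1 \<equiv> tmap_id L S (Incl1 B1 B2)"
abbreviation "i2 \<equiv> tmap_id L S (Incl2 B1 B2)"
abbreviation "c1 s \<equiv> restrict (fst \<circ> s) X"
abbreviation "c2 s \<equiv> restrict (snd \<circ> s) X"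
abbreviation "cs \<equiv> conn_sum X DX B1 B2 N1 N2"

lemma vpb_T: "is_vpb X DX T"
  by (rule is_vpb_tensor_bundle[OF dX smooth_Lam1_proj[OF dX]])

sublocale I1: tensor_id_map X DX L B1 S "Incl1 B1 B2"
  by unfold_locales
    (use dX smooth_Lam1_proj[OF dX] fib_linear_Incl1[OF V1 V2] smooth_Incl1[OF V1 V2] proj_Incl1 in auto)

sublocale I2: tensor_id_map X DX L B2 S "Incl2 B1 B2"
  by unfold_locales
    (use dX smooth_Lam1_proj[OF dX] fib_linear_Incl2[OF V1 V2] smooth_Incl2[OF V1 V2] proj_Incl2[OF V1 V2] in auto)

lemma conn1:
  "\<And>s. s \<in> sections X DX B1 \<Longrightarrow> N1 s \<in> sections X DX T1"
  "\<And>s t. s \<in> sections X DX B1 \<Longrightarrow> t \<in> sections X DX B1 \<Longrightarrow> N1 (sec_add X B1 s t) = sec_add X T1 (N1 s) (N1 t)"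
  "\<And>c s. s \<in> sections X DX B1 \<Longrightarrow> N1 (sec_smul X B1 c s) = sec_smul X T1 c (N1 s)"
  "smooth_betw (sections X DX B1) (sec_diff X DX B1) (sections X DX T1) (sec_diff X DX T1) N1"
  "\<And>h s. s \<in> sections X DX B1 \<Longrightarrow> smooth_betw X DX UNIV real_diff h \<Longrightarrow>
          N1 (restrict (\<lambda>x. pb_smul B1 (h x) (s x)) X) =
          restrict (\<lambda>x. pb_add T1 (tens L B1 (lcls DX x (dform DX h)) (s x)) (pb_smul T1 (h x) (N1 s x))) X"
  using C1 unfolding is_connection_def Let_def by blast+

lemma conn2:
  "\<And>s. s \<in> sections X DX B2 \<Longrightarrow> N2 s \<in> sections X DX T2"
  "\<And>s t. s \<in> sections X DX B2 \<Longrightarrow> t \<in> sections X DX B2 \<Longrightarrow> N2 (sec_add X B2 s t) = sec_add X T2 (N2 s) (N2 t)"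
  "\<And>c s. s \<in> sections X DX B2 \<Longrightarrow> N2 (sec_smul X B2 c s) = sec_smul X T2 c (N2 s)"
  "smooth_betw (sections X DX B2) (sec_diff X DX B2) (sections X DX T2) (sec_diff X DX T2) N2"
  "\<And>h s. s \<in> sections X DX B2 \<Longrightarrow> smooth_betw X DX UNIV real_diff h \<Longrightarrow>
          N2 (restrict (\<lambda>x. pb_smul B2 (h x) (s x)) X) =
          restrict (\<lambda>x. pb_add T2 (tens L B2 (lcls DX x (dform DX h)) (s x)) (pb_smul T2 (h x) (N2 s x))) X"
  using C2 unfolding is_connection_def Let_def by blast+

lemma c1_sections: "s \<in> sections X DX S \<Longrightarrow> c1 s \<in> sections X DX B1"
  using sections_comp[OF dX _ smooth_dsum_fst proj_dsum_fst] by simp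

lemma c2_sections: "s \<in> sections X DX S \<Longrightarrow> c2 s \<in> sections X DX B2"
  using sections_comp[OF dX _ smooth_dsum_snd proj_dsum_snd] by simp

lemma cs_at: "x \<in> X \<Longrightarrow> cs s x = pb_add TP (i1 (N1 (c1 s) x)) (i2 (N2 (c2 s) x))"
  unfolding conn_sum_def Let_def by simp

lemma cs_extensional: "cs s \<in> extensional X"
  unfolding conn_sum_def Let_def by simp

lemma N1_fib:
  assumes "s \<in> sections X DX S" "x \<in> X"
  shows "N1 (c1 s) x \<in> fib TP1 x" "i1 (N1 (c1 s) x) \<in> fib TP x"
proof -
  show a: "N1 (c1 s) x \<in> fib TP1 x"
    using sections_fib[OF conn1(1)[OF c1_sections[OF assms(1)]] assms(2)] by simp
  show "i1 (N1 (c1 s) x) \<in> fib TP x" by (rule tmap_fib[OF assms(2) fib_linear_Incl1[OF V1 V2 assms(2)] a])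
qed

lemma N2_fib:
  assumes "s \<in> sections X DX S" "x \<in> X"
  shows "N2 (c2 s) x \<in> fib TP2 x" "i2 (N2 (c2 s) x) \<in> fib TP x"
proof -
  show a: "N2 (c2 s) x \<in> fib TP2 x"
    using sections_fib[OF conn2(1)[OF c2_sections[OF assms(1)]] assms(2)] by simp
  show "i2 (N2 (c2 s) x) \<in> fib TP x" by (rule tmap_fib[OF assms(2) fib_linear_Incl2[OF V1 V2 assms(2)] a])
qed

lemma vector_space_on_TP: "x \<in> X \<Longrightarrow> vector_space_on (fib TP x) (pb_add TP) (pb_smul TP) (pb_zero TP x)"
  by (rule vector_space_on_tensor_pre)

lemma plot_add_Incl:
  assumes r1: "plot_of k J r1 \<in> pb_diff T1" and r2: "plot_of k J r2 \<in> pb_diff T2"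
    and fibs: "\<And>z. z \<in> J \<Longrightarrow> \<exists>x\<in>X. r1 z \<in> fib TP1 x \<and> r2 z \<in> fib TP2 x"
  shows "plot_of k J (\<lambda>z. pb_add TP (i1 (r1 z)) (i2 (r2 z))) \<in> pb_diff T"
proof -
  have "plot_of k J (i1 \<circ> r1) \<in> pb_diff T" "plot_of k J (i2 \<circ> r2) \<in> pb_diff T"
    using I1.tmap_plot[OF r1[unfolded plot_of_def]] I2.tmap_plot[OF r2[unfolded plot_of_def]] by simp_all
  then have "plot_of k J (\<lambda>z. pb_add T ((i1 \<circ> r1) z) ((i2 \<circ> r2) z)) \<in> pb_diff T"
  proof (rule plot_pb_add[OF vpb_T])
    fix z assume z: "z \<in> J"
    obtain x where x: "x \<in> X" "r1 z \<in> fib TP1 x" "r2 z \<in> fib TP2 x" using fibs[OF z] by blast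
    have "i1 (r1 z) \<in> fib TP x" by (rule tmap_fib[OF x(1) fib_linear_Incl1[OF V1 V2 x(1)] x(2)])
    moreover have "i2 (r2 z) \<in> fib TP x" by (rule tmap_fib[OF x(1) fib_linear_Incl2[OF V1 V2 x(1)] x(3)])
    ultimately show "(i1 \<circ> r1) z \<in> pb_tot T \<and> (i2 \<circ> r2) z \<in> pb_tot T \<and>
        pb_proj T ((i1 \<circ> r1) z) = pb_proj T ((i2 \<circ> r2) z)"
      unfolding fib_def by simp
  qed
  then show ?thesis by simp
qed


lemma sections_add_Incl:
  assumes \<sigma>1: "\<sigma>1 \<in> sections X DX T1" and \<sigma>2: "\<sigma>2 \<in> sections X DX T2"
  shows "restrict (\<lambda>x. pb_add TP (i1 (\<sigma>1 x)) (i2 (\<sigma>2 x))) X \<in> sections X DX T"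
proof (rule sectionsI)
  fix x assume x: "x \<in> X"
  have "i1 (\<sigma>1 x) \<in> fib TP x" "i2 (\<sigma>2 x) \<in> fib TP x"
    using tmap_fib[OF x fib_linear_Incl1[OF V1 V2 x]] tmap_fib[OF x fib_linear_Incl2[OF V1 V2 x]]
      sections_fib[OF \<sigma>1 x] sections_fib[OF \<sigma>2 x] by simp_all
  from vector_space_onD(2)[OF vector_space_on_TP[OF x] this]
  show "restrict (\<lambda>x. pb_add TP (i1 (\<sigma>1 x)) (i2 (\<sigma>2 x))) X x \<in> fib T x" using x by simp
next
  fix n U p assume P: "(n, U, p) \<in> DX"
  have pX: "\<And>u. u \<in> U \<Longrightarrow> p u \<in> X" using diffeology_plotD(3)[OF dX P] by blast
  have "plot_of n U (\<lambda>z. pb_add TP (i1 ((\<sigma>1 \<circ> p) z)) (i2 ((\<sigma>2 \<circ> p) z))) \<in> pb_diff T"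
    by (rule plot_add_Incl[OF sections_plot[OF \<sigma>1 P] sections_plot[OF \<sigma>2 P]])
      (use pX sections_fib[OF \<sigma>1] sections_fib[OF \<sigma>2] in auto)
  then show "plot_of n U (restrict (\<lambda>x. pb_add TP (i1 (\<sigma>1 x)) (i2 (\<sigma>2 x))) X \<circ> p) \<in> pb_diff T"
    using pX by (subst plot_of_cong[where g="\<lambda>z. pb_add TP (i1 ((\<sigma>1 \<circ> p) z)) (i2 ((\<sigma>2 \<circ> p) z))"]) auto
qed simp

lemma sec_diff_add_Incl:
  assumes Q1: "(n, U, Q1) \<in> sec_diff X DX T1" and Q2: "(n, U, Q2) \<in> sec_diff X DX T2"
  shows "plot_of n U (\<lambda>u. restrict (\<lambda>x. pb_add TP (i1 (Q1 u x)) (i2 (Q2 u x))) X) \<in> sec_diff X DX T"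
  unfolding sec_diff_def
proof (rule plot_of_in_func_diffI)
  note QD1 = func_diffD[OF Q1[unfolded sec_diff_def]] and QD2 = func_diffD[OF Q2[unfolded sec_diff_def]]
  show "open_in_Rn n U" by (rule QD1(1))
  fix u assume "u \<in> U"
  then show "restrict (\<lambda>x. pb_add TP (i1 (Q1 u x)) (i2 (Q2 u x))) X \<in> sections X DX T"
    using QD1(2) QD2(2) by (blast intro: sections_add_Incl)
next
  note QD1 = func_diffD[OF Q1[unfolded sec_diff_def]] and QD2 = func_diffD[OF Q2[unfolded sec_diff_def]]
  fix m W p assume W: "(m, W, p) \<in> DX"
  let ?J = "joinset n U W"
  have parts: "fpart n z \<in> U" "p (spart n z) \<in> X" if "z \<in> ?J" for z
    using joinset_parts[OF that open_in_Rn_subset[OF QD1(1)]] diffeology_plotD(3)[OF dX W] by auto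
  have "plot_of (n + m) ?J (\<lambda>z. pb_add TP (i1 (Q1 (fpart n z) (p (spart n z))))
      (i2 (Q2 (fpart n z) (p (spart n z))))) \<in> pb_diff T"
  proof (rule plot_add_Incl[OF QD1(3)[OF W] QD2(3)[OF W]])
    fix z assume "z \<in> ?J"
    note z = parts[OF this]
    have "Q1 (fpart n z) \<in> sections X DX T1" "Q2 (fpart n z) \<in> sections X DX T2"
      using QD1(2) QD2(2) z(1) by blast+
    from sections_fib[OF this(1) z(2)] sections_fib[OF this(2) z(2)]
    show "\<exists>x\<in>X. Q1 (fpart n z) (p (spart n z)) \<in> fib TP1 x \<and> Q2 (fpart n z) (p (spart n z)) \<in> fib TP2 x"
      using z(2) by auto
  qed
  then show "plot_of (n + m) ?J (\<lambda>z. restrict (\<lambda>u. restrict (\<lambda>x. pb_add TP (i1 (Q1 u x)) (i2 (Q2 u x))) X) U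
      (fpart n z) (p (spart n z))) \<in> pb_diff T"
    using parts by (subst plot_of_cong[where g="\<lambda>z. pb_add TP (i1 (Q1 (fpart n z) (p (spart n z))))
      (i2 (Q2 (fpart n z) (p (spart n z))))"]) auto
qed

lemma cs_eq: "cs s = restrict (\<lambda>x. pb_add TP (i1 (N1 (c1 s) x)) (i2 (N2 (c2 s) x))) X"
  unfolding conn_sum_def Let_def by simp

lemma cs_sections: "s \<in> sections X DX S \<Longrightarrow> cs s \<in> sections X DX T"
  unfolding cs_eq by (intro sections_add_Incl conn1(1) conn2(1) c1_sections c2_sections)

lemma cs_smooth: "smooth_betw (sections X DX S) (sec_diff X DX S) (sections X DX T) (sec_diff X DX T) cs"
  unfolding smooth_betw_def
proof (intro conjI ballI)
  fix P assume "P \<in> sec_diff X DX S"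
  then obtain n U q where P: "P = (n, U, q)" and Q: "(n, U, q) \<in> sec_diff X DX S" by (cases P) auto
  have "plot_of n U (N1 \<circ> (\<lambda>u. c1 (q u))) \<in> sec_diff X DX T1"
    using smooth_betwD[OF conn1(4) sec_diff_comp[OF dX Q smooth_dsum_fst proj_dsum_fst, unfolded plot_of_def]]
    by simp
  moreover have "plot_of n U (N2 \<circ> (\<lambda>u. c2 (q u))) \<in> sec_diff X DX T2"
    using smooth_betwD[OF conn2(4) sec_diff_comp[OF dX Q smooth_dsum_snd proj_dsum_snd, unfolded plot_of_def]]
    by simp
  ultimately have "plot_of n U (\<lambda>u. restrict (\<lambda>x. pb_add TP (i1 (restrict (N1 \<circ> (\<lambda>u. c1 (q u))) U u x))
      (i2 (restrict (N2 \<circ> (\<lambda>u. c2 (q u))) U u x))) X) \<in> sec_diff X DX T"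
    unfolding plot_of_def by (rule sec_diff_add_Incl[unfolded plot_of_def])
  moreover have "plot_of n U (\<lambda>u. restrict (\<lambda>x. pb_add TP (i1 (restrict (N1 \<circ> (\<lambda>u. c1 (q u))) U u x))
      (i2 (restrict (N2 \<circ> (\<lambda>u. c2 (q u))) U u x))) X) = plot_of n U (cs \<circ> q)"
    by (rule plot_of_cong) (simp add: cs_eq)
  ultimately show "case P of (n, U, p) \<Rightarrow> plot_of n U (cs \<circ> p) \<in> sec_diff X DX T"
    unfolding P by simp
qed (rule cs_sections)

lemma cs_add:
  assumes s: "s \<in> sections X DX S" and t: "t \<in> sections X DX S"
  shows "cs (sec_add X S s t) = sec_add X T (cs s) (cs t)"
proof (rule ext)
  fix x
  show "cs (sec_add X S s t) x = sec_add X T (cs s) (cs t) x"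
  proof (cases "x \<in> X")
    case x: True
    have "c1 (sec_add X S s t) = sec_add X B1 (c1 s) (c1 t)" "c2 (sec_add X S s t) = sec_add X B2 (c2 s) (c2 t)"
      by (auto simp: sec_add_def pb_add_dsum)
    then have N: "N1 (c1 (sec_add X S s t)) x = pb_add TP1 (N1 (c1 s) x) (N1 (c1 t) x)"
        "N2 (c2 (sec_add X S s t)) x = pb_add TP2 (N2 (c2 s) x) (N2 (c2 t) x)"
      using conn1(2)[OF c1_sections[OF s] c1_sections[OF t]] conn2(2)[OF c2_sections[OF s] c2_sections[OF t]] x
      by (simp_all add: sec_add_def)
    have "cs (sec_add X S s t) x = pb_add TP (pb_add TP (i1 (N1 (c1 s) x)) (i1 (N1 (c1 t) x)))
         (pb_add TP (i2 (N2 (c2 s) x)) (i2 (N2 (c2 t) x)))"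
      unfolding cs_at[OF x] N
        tmap_add[OF x fib_linear_Incl1[OF V1 V2 x] N1_fib(1)[OF s x] N1_fib(1)[OF t x]]
        tmap_add[OF x fib_linear_Incl2[OF V1 V2 x] N2_fib(1)[OF s x] N2_fib(1)[OF t x]] ..
    also have "\<dots> = pb_add TP (pb_add TP (i1 (N1 (c1 s) x)) (i2 (N2 (c2 s) x)))
         (pb_add TP (i1 (N1 (c1 t) x)) (i2 (N2 (c2 t) x)))"
      by (rule vector_space_on_add_add_swap[OF vector_space_on_TP[OF x]
            N1_fib(2)[OF s x] N1_fib(2)[OF t x] N2_fib(2)[OF s x] N2_fib(2)[OF t x]])
    also have "\<dots> = sec_add X T (cs s) (cs t) x"
      using x by (simp add: sec_add_def cs_at)
    finally show ?thesis .
  qed (use cs_extensional in \<open>simp add: sec_add_def extensional_def\<close>)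
qed

lemma cs_smul:
  assumes s: "s \<in> sections X DX S"
  shows "cs (sec_smul X S c s) = sec_smul X T c (cs s)"
proof (rule ext)
  fix x
  show "cs (sec_smul X S c s) x = sec_smul X T c (cs s) x"
  proof (cases "x \<in> X")
    case x: True
    have "c1 (sec_smul X S c s) = sec_smul X B1 c (c1 s)" "c2 (sec_smul X S c s) = sec_smul X B2 c (c2 s)"
      by (auto simp: sec_smul_def pb_smul_dsum)
    then have N: "N1 (c1 (sec_smul X S c s)) x = pb_smul TP1 c (N1 (c1 s) x)"
        "N2 (c2 (sec_smul X S c s)) x = pb_smul TP2 c (N2 (c2 s) x)"
      using conn1(3)[OF c1_sections[OF s]] conn2(3)[OF c2_sections[OF s]] x by (simp_all add: sec_smul_def)
    have "cs (sec_smul X S c s) x =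
        pb_add TP (pb_smul TP c (i1 (N1 (c1 s) x))) (pb_smul TP c (i2 (N2 (c2 s) x)))"
      unfolding cs_at[OF x] N
        tmap_smul[OF x fib_linear_Incl1[OF V1 V2 x] N1_fib(1)[OF s x]]
        tmap_smul[OF x fib_linear_Incl2[OF V1 V2 x] N2_fib(1)[OF s x]] ..
    also have "\<dots> = pb_smul TP c (pb_add TP (i1 (N1 (c1 s) x)) (i2 (N2 (c2 s) x)))"
      by (rule vector_space_onD(8)[OF vector_space_on_TP[OF x] N1_fib(2)[OF s x] N2_fib(2)[OF s x], symmetric])
    also have "\<dots> = sec_smul X T c (cs s) x"
      using x by (simp add: sec_smul_def cs_at)
    finally show ?thesis .
  qed (use cs_extensional in \<open>simp add: sec_smul_def extensional_def\<close>)
qed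


lemma cs_leibniz_at:
  assumes s: "s \<in> sections X DX S" and h: "smooth_betw X DX UNIV real_diff h" and x: "x \<in> X"
  shows "cs (restrict (\<lambda>x. pb_smul S (h x) (s x)) X) x =
     pb_add TP (tens L S (lcls DX x (dform DX h)) (s x)) (pb_smul TP (h x) (cs s x))"
proof -
  let ?l = "lcls DX x (dform DX h)"
  have l: "?l \<in> fib L x" using x dform_Omega1[OF dX h] unfolding fib_def by auto
  have sx: "fst (s x) \<in> fib B1 x" "snd (s x) \<in> fib B2 x"
    using sections_fib[OF s x] fib_dsum[of "fst (s x)" "snd (s x)" B1 B2 x] by simp_all
  note l1 = fib_linear_Incl1[OF V1 V2 x] and l2 = fib_linear_Incl2[OF V1 V2 x]
  have "c1 (restrict (\<lambda>x. pb_smul S (h x) (s x)) X) = restrict (\<lambda>x. pb_smul B1 (h x) (c1 s x)) X"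
    "c2 (restrict (\<lambda>x. pb_smul S (h x) (s x)) X) = restrict (\<lambda>x. pb_smul B2 (h x) (c2 s x)) X"
    by (auto simp: pb_smul_dsum)
  then have N: "N1 (c1 (restrict (\<lambda>x. pb_smul S (h x) (s x)) X)) x =
      pb_add TP1 (tens L B1 ?l (fst (s x))) (pb_smul TP1 (h x) (N1 (c1 s) x))"
    "N2 (c2 (restrict (\<lambda>x. pb_smul S (h x) (s x)) X)) x =
      pb_add TP2 (tens L B2 ?l (snd (s x))) (pb_smul TP2 (h x) (N2 (c2 s) x))"
    using conn1(5)[OF c1_sections[OF s] h] conn2(5)[OF c2_sections[OF s] h] x by simp_all
  let ?A1 = "tens L S ?l (Incl1 B1 B2 (fst (s x)))" and ?A2 = "tens L S ?l (Incl2 B1 B2 (snd (s x)))"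
  let ?M1 = "i1 (N1 (c1 s) x)" and ?M2 = "i2 (N2 (c2 s) x)"
  note vs = vector_space_on_TP[OF x]
  have A: "?A1 \<in> fib TP x" "?A2 \<in> fib TP x"
    using tens_fib[OF x l fib_linearD(1)[OF l1 sx(1)]] tens_fib[OF x l fib_linearD(1)[OF l2 sx(2)]] by simp_all
  have "cs (restrict (\<lambda>x. pb_smul S (h x) (s x)) X) x =
      pb_add TP (pb_add TP ?A1 (pb_smul TP (h x) ?M1)) (pb_add TP ?A2 (pb_smul TP (h x) ?M2))"
    unfolding cs_at[OF x] N
      tmap_add[OF x l1 tens_fib[OF x l sx(1)] vector_space_onD(3)[OF vector_space_on_tensor_pre[OF x] N1_fib(1)[OF s x]]]
      tmap_add[OF x l2 tens_fib[OF x l sx(2)] vector_space_onD(3)[OF vector_space_on_tensor_pre[OF x] N2_fib(1)[OF s x]]]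
      tmap_tens[OF l1 l sx(1)] tmap_tens[OF l2 l sx(2)]
      tmap_smul[OF x l1 N1_fib(1)[OF s x]] tmap_smul[OF x l2 N2_fib(1)[OF s x]] ..
  also have "\<dots> = pb_add TP (pb_add TP ?A1 ?A2) (pb_add TP (pb_smul TP (h x) ?M1) (pb_smul TP (h x) ?M2))"
    by (rule vector_space_on_add_add_swap[OF vs A(1) vector_space_onD(3)[OF vs N1_fib(2)[OF s x]]
          A(2) vector_space_onD(3)[OF vs N2_fib(2)[OF s x]]])
  also have "pb_add TP ?A1 ?A2 = tens L S ?l (s x)"
    using tens_Incl_add[OF V1 V2 x l sx] by simp
  also have "pb_add TP (pb_smul TP (h x) ?M1) (pb_smul TP (h x) ?M2) = pb_smul TP (h x) (pb_add TP ?M1 ?M2)"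
    by (rule vector_space_onD(8)[OF vs N1_fib(2)[OF s x] N2_fib(2)[OF s x], symmetric])
  finally show ?thesis unfolding cs_at[OF x] .
qed

lemma cs_leibniz:
  assumes s: "s \<in> sections X DX S" and h: "smooth_betw X DX UNIV real_diff h"
  shows "cs (restrict (\<lambda>x. pb_smul S (h x) (s x)) X) =
     restrict (\<lambda>x. pb_add T (tens L S (lcls DX x (dform DX h)) (s x)) (pb_smul T (h x) (cs s x))) X"
  using cs_leibniz_at[OF s h] cs_extensional[of "restrict (\<lambda>x. pb_smul S (h x) (s x)) X"]
  by (intro ext) (simp add: extensional_def)

lemma is_connection_conn_sum: "is_connection X DX S cs"
  unfolding is_connection_def Let_def
  using cs_sections cs_add cs_smul cs_smooth cs_leibniz by simp

end

theorem proposition3p8: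
  fixes X :: "'a set" and DX :: "'a plot set"
    and B1 :: "('a, 'v) vpb" and B2 :: "('a, 'w) vpb"
    and N1 :: "('a \<Rightarrow> 'v) \<Rightarrow> ('a \<Rightarrow> ('a, 'a lam, 'v) tens)"
    and N2 :: "('a \<Rightarrow> 'w) \<Rightarrow> ('a \<Rightarrow> ('a, 'a lam, 'w) tens)"
  assumes "diffeology X DX"
    and "is_vpb X DX B1" and "fin_dim_vpb X B1"
    and "is_vpb X DX B2" and "fin_dim_vpb X B2"
    and "is_connection X DX B1 N1" and "is_connection X DX B2 N2"
  shows "(\<forall>s\<in>sections X DX (dsum B1 B2).
            restrict (fst \<circ> s) X \<in> sections X DX B1 \<and> restrict (snd \<circ> s) X \<in> sections X DX B2 \<and>
            conn_sum X DX B1 B2 N1 N2 s \<in> sections X DX (tensor_bundle X DX (Lam1 X DX) (dsum B1 B2)))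
         \<and> is_connection X DX (dsum B1 B2) (conn_sum X DX B1 B2 N1 N2)"
proof -
  interpret two_connections X DX B1 B2 N1 N2
    by unfold_locales (use assms in auto)
  show ?thesis using c1_sections c2_sections cs_sections is_connection_conn_sum by blast
qed

end
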